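(* Fix $s\in(0,1)$ and let $F,V_s,\psi_1,\psi_3,p_{+,s},q_{-,s},q_+$ and $\overline H_s$ be as in the context. Then $0<p_{+,s}<q_{-,s}<q_+$ and: (a) if $0\le p\le p_{+,s}$, then $\overline H_s(p)=0$; (b) if $p_{+,s}\le p\le q_{-,s}$, then $\overline H_s(p)$ is the unique $\lambda\in[0,1/3]$ with $p=\int_\lambda^{1/3}\psi_3(y)dy+\int_{1/2}^{1+\lambda}\psi_1(y)dy+\int_{1/3}^{1/2}[s\psi_1(y)+(1-s)\psi_3(y)]dy$; (c) if $q_{-,s}\le p\le q_+$, then $\overline H_s(p)=1/3$; (d) if $p\ge q_+$, then $\overline H_s(p)$ is the unique $\lambda\ge1/3$ with $p=\int_\lambda^{1+\lambda}\psi_1(y)dy$; (e) if $p<0$, then $\overline H_s(p)=\overline H_{1-s}(-p)$.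
   Context: $F:\mathbb R\to\mathbb R$ is smooth and even, and for some $0<\theta_3<\theta_2<\theta_1$: $F(0)=0$, $F(\theta_2)=1/2$, $F(\theta_1)=F(\theta_3)=1/3$, $F(r)\to+\infty$ as $r\to\infty$, $F$ strictly increasing on $[0,\theta_2]\cup[\theta_1,\infty)$ and strictly decreasing on $[\theta_2,\theta_1]$. For $r\in(0,1)$, $V_r$ is the $1$-periodic function with $V_r(x)=x/r$ for $0\le x\le r$ and $V_r(x)=(1-x)/(1-r)$ for $r<x\le1$, and $\overline H_r(p)$ is the unique constant $\lambda$ for which $F(w'(y))-V_r(y)=\lambda$ in $\mathbb R$ has a viscosity solution $w$ with $w(x)-px$ periodic. $\psi_1:=(F|_{[\theta_1,\infty)})^{-1}:[1/3,\infty)\to[\theta_1,\infty)$ and $\psi_3:=(F|_{[0,\theta_2]})^{-1}:[0,1/2]\to[0,\theta_2]$. Further, $p_{+,s}:=\int_0^{1/3}\psi_3+\int_{1/2}^1\psi_1+\int_{1/3}^{1/2}[s\psi_1+(1-s)\psi_3]$, $q_{-,s}:=\int_{1/2}^{4/3}\psi_1+\int_{1/3}^{1/2}[s\psi_1+(1-s)\psi_3]$, $q_+:=\int_{1/3}^{4/3}\psi_1$ (integrals in $dy$). *)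

theory Defs
  imports "HOL-Analysis.Analysis"
begin

definition smooth_fun :: "(real \<Rightarrow> real) \<Rightarrow> bool" where
  "smooth_fun f \<longleftrightarrow> (\<forall>n x. ((deriv ^^ n) f) differentiable (at x))"

definition Vr :: "real \<Rightarrow> real \<Rightarrow> real" where
  "Vr r x = (let t = frac x in if t \<le> r then t / r else (1 - t) / (1 - r))"

definition C1_fun :: "(real \<Rightarrow> real) \<Rightarrow> bool" where
  "C1_fun \<phi> \<longleftrightarrow> \<phi> differentiable_on UNIV \<and> continuous_on UNIV (deriv \<phi>)"

definition visc_sub :: "(real \<Rightarrow> real) \<Rightarrow> (real \<Rightarrow> real) \<Rightarrow> real \<Rightarrow> (real \<Rightarrow> real) \<Rightarrow> bool" where
  "visc_sub F V lam w \<longleftrightarrow> continuous_on UNIV w \<and>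
     (\<forall>\<phi> x. C1_fun \<phi> \<longrightarrow>
        (\<exists>e>0. \<forall>y. \<bar>y - x\<bar> < e \<longrightarrow> w y - \<phi> y \<le> w x - \<phi> x) \<longrightarrow>
        F (deriv \<phi> x) - V x \<le> lam)"

definition visc_super :: "(real \<Rightarrow> real) \<Rightarrow> (real \<Rightarrow> real) \<Rightarrow> real \<Rightarrow> (real \<Rightarrow> real) \<Rightarrow> bool" where
  "visc_super F V lam w \<longleftrightarrow> continuous_on UNIV w \<and>
     (\<forall>\<phi> x. C1_fun \<phi> \<longrightarrow>
        (\<exists>e>0. \<forall>y. \<bar>y - x\<bar> < e \<longrightarrow> w y - \<phi> y \<ge> w x - \<phi> x) \<longrightarrow>
        F (deriv \<phi> x) - V x \<ge> lam)"

definition visc_sol :: "(real \<Rightarrow> real) \<Rightarrow> (real \<Rightarrow> real) \<Rightarrow> real \<Rightarrow> (real \<Rightarrow> real) \<Rightarrow> bool" where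
  "visc_sol F V lam w \<longleftrightarrow> visc_sub F V lam w \<and> visc_super F V lam w"

definition Hbar :: "(real \<Rightarrow> real) \<Rightarrow> real \<Rightarrow> real \<Rightarrow> real" where
  "Hbar F r p = (THE lam. \<exists>w. visc_sol F (Vr r) lam w \<and>
                    (\<forall>x. w (x + 1) - p * (x + 1) = w x - p * x))"

definition psi1 :: "(real \<Rightarrow> real) \<Rightarrow> real \<Rightarrow> real \<Rightarrow> real" where
  "psi1 F \<theta>1 = the_inv_into {\<theta>1..} F"

definition psi3 :: "(real \<Rightarrow> real) \<Rightarrow> real \<Rightarrow> real \<Rightarrow> real" where
  "psi3 F \<theta>2 = the_inv_into {0..\<theta>2} F"

definition mixint :: "(real \<Rightarrow> real) \<Rightarrow> real \<Rightarrow> real \<Rightarrow> real \<Rightarrow> real" where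
  "mixint F \<theta>1 \<theta>2 s = integral {1/3..1/2} (\<lambda>y. s * psi1 F \<theta>1 y + (1 - s) * psi3 F \<theta>2 y)"

definition p_plus :: "(real \<Rightarrow> real) \<Rightarrow> real \<Rightarrow> real \<Rightarrow> real \<Rightarrow> real" where
  "p_plus F \<theta>1 \<theta>2 s = integral {0..1/3} (psi3 F \<theta>2) + integral {1/2..1} (psi1 F \<theta>1)
      + mixint F \<theta>1 \<theta>2 s"

definition q_minus :: "(real \<Rightarrow> real) \<Rightarrow> real \<Rightarrow> real \<Rightarrow> real \<Rightarrow> real" where
  "q_minus F \<theta>1 \<theta>2 s = integral {1/2..4/3} (psi1 F \<theta>1) + mixint F \<theta>1 \<theta>2 s"

definition q_plus :: "(real \<Rightarrow> real) \<Rightarrow> real \<Rightarrow> real" where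
  "q_plus F \<theta>1 = integral {1/3..4/3} (psi1 F \<theta>1)"

end

theory Submission
  imports Defs "HOL-Library.Periodic_Fun"
begin

text \<open>
  The effective Hamiltonian is well defined because of a comparison principle: if the cell problem
  had solutions with the same slope \<open>p\<close> for constants \<open>\<lambda>\<^sub>1 < \<lambda>\<^sub>2\<close>, doubling the variables with a
  large quadratic penalty gives a point where both viscosity inequalities are tested at the same
  slope, so \<open>\<lambda>\<^sub>2 - \<lambda>\<^sub>1 \<le> V(x\<^sub>0) - V(y\<^sub>0)\<close>, while the penalty forces \<open>x\<^sub>0 - y\<^sub>0\<close> and hence this
  difference to be small.

  It therefore suffices to exhibit one solution for each \<open>p\<close>. Its derivative is, piece by piece,
  one of the branches \<open>\<pm>\<psi>\<^sub>i\<close> of \<open>F\<^sup>-\<^sup>1\<close> evaluated at \<open>\<lambda> + V\<^sub>s\<close>; at the finitely many points where the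
  branch changes only one-sided derivatives exist, and the viscosity inequalities reduce to a sign
  condition on \<open>F - \<lambda> - V\<^sub>s\<close> between them. For \<open>\<lambda> \<ge> 1/3\<close> the upper branch alone works, for
  \<open>0 \<le> \<lambda> \<le> 1/3\<close> a single excursion to the upper branch; for \<open>\<lambda> = 1/3\<close> and \<open>\<lambda> = 0\<close> the switching
  points are free parameters, and the intermediate value theorem shows that the slopes of these
  solutions fill \<open>[q\<^sub>-, q\<^sub>+]\<close> and \<open>[0, p\<^sub>+]\<close>. Negative slopes reduce to positive ones by the reflection
  \<open>x \<mapsto> -x\<close>, which exchanges \<open>V\<^sub>s\<close> and \<open>V\<^sub>1\<^sub>-\<^sub>s\<close>.
\<close>

section \<open>Viscosity solutions with one-sided derivatives\<close>

text \<open>At a point where a continuous \<open>w\<close> has left derivative \<open>l\<close> and right derivative \<open>r\<close>,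
  test functions touching \<open>w\<close> from above have slopes in \<open>[r, l]\<close> and those touching from below
  have slopes in \<open>[l, r]\<close>; the kink is admissible for \<open>F(w') = v\<close> if \<open>F\<close> has the right sign there.\<close>

definition admissible_kink :: "(real \<Rightarrow> real) \<Rightarrow> real \<Rightarrow> real \<Rightarrow> real \<Rightarrow> bool" where
  "admissible_kink F l r v \<longleftrightarrow>
     (\<forall>q. r \<le> q \<and> q \<le> l \<longrightarrow> F q \<le> v) \<and> (\<forall>q. l \<le> q \<and> q \<le> r \<longrightarrow> v \<le> F q)"

lemma admissible_kink_smooth: "F a = v \<Longrightarrow> admissible_kink F a a v"
  unfolding admissible_kink_def by auto

lemma admissible_kink_down:
  assumes "r \<le> l" "F l = v" "\<And>q. r \<le> q \<Longrightarrow> q \<le> l \<Longrightarrow> F q \<le> v"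
  shows "admissible_kink F l r v"
  using assms unfolding admissible_kink_def by (auto dest: order_antisym)

lemma admissible_kink_up:
  assumes "l \<le> r" "F l = v" "\<And>q. l \<le> q \<Longrightarrow> q \<le> r \<Longrightarrow> v \<le> F q"
  shows "admissible_kink F l r v"
  using assms unfolding admissible_kink_def by (auto dest: order_antisym)

lemma local_max_one_sided_derivatives:
  fixes f :: "real \<Rightarrow> real"
  assumes r: "(f has_real_derivative r) (at_right x)" and l: "(f has_real_derivative l) (at_left x)"
    and max: "e > 0" "\<And>y. \<bar>y - x\<bar> < e \<Longrightarrow> f y \<le> f x"
  shows "r \<le> 0" "0 \<le> l"
proof -
  show "r \<le> 0"
  proof (rule ccontr)
    assume "\<not> r \<le> 0"
    then obtain d where d: "d > 0" "\<And>h. h > 0 \<Longrightarrow> x + h \<in> {x<..} \<Longrightarrow> h < d \<Longrightarrow> f x < f (x + h)"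
      using has_real_derivative_pos_inc_right[OF r] by auto
    have "f x < f (x + min d e / 2)" by (rule d(2)) (use d max in auto)
    moreover have "f (x + min d e / 2) \<le> f x" by (rule max(2)) (use d max in auto)
    ultimately show False by simp
  qed
  show "0 \<le> l"
  proof (rule ccontr)
    assume "\<not> 0 \<le> l"
    then obtain d where d: "d > 0" "\<And>h. h > 0 \<Longrightarrow> x - h \<in> {..<x} \<Longrightarrow> h < d \<Longrightarrow> f x < f (x - h)"
      using has_real_derivative_neg_dec_left[OF l] by auto
    have "f x < f (x - min d e / 2)" by (rule d(2)) (use d max in auto)
    moreover have "f (x - min d e / 2) \<le> f x" by (rule max(2)) (use d max in auto)
    ultimately show False by simp
  qed
qed

lemma touching_from_above_slope_bounds:
  fixes w \<phi> :: "real \<Rightarrow> real"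
  assumes "(w has_real_derivative r) (at_right x)" "(w has_real_derivative l) (at_left x)"
    and "(\<phi> has_real_derivative D) (at x)"
    and "e > 0" "\<And>y. \<bar>y - x\<bar> < e \<Longrightarrow> w y - \<phi> y \<le> w x - \<phi> x"
  shows "r \<le> D \<and> D \<le> l"
  using local_max_one_sided_derivatives[of "\<lambda>y. w y - \<phi> y" "r - D" x "l - D" e]
    DERIV_diff[OF assms(1) has_field_derivative_at_within[OF assms(3)]]
    DERIV_diff[OF assms(2) has_field_derivative_at_within[OF assms(3)]] assms(4,5)
  by auto

lemma C1_fun_has_derivative: "C1_fun \<phi> \<Longrightarrow> (\<phi> has_real_derivative deriv \<phi> x) (at x)"
  unfolding C1_fun_def DERIV_deriv_iff_real_differentiable by (simp add: differentiable_on_def)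

lemma visc_sol_of_one_sided_derivatives:
  fixes w V :: "real \<Rightarrow> real"
  assumes R: "\<And>x. (w has_real_derivative R x) (at_right x)"
    and L: "\<And>x. (w has_real_derivative L x) (at_left x)"
    and kink: "\<And>x. admissible_kink F (L x) (R x) (lam + V x)"
  shows "visc_sol F V lam w"
proof -
  have "isCont w x" for x
    using DERIV_continuous[OF R] DERIV_continuous[OF L] continuous_at_split by blast
  then have cont: "continuous_on UNIV w" by (simp add: continuous_at_imp_continuous_on)
  show ?thesis
    unfolding visc_sol_def visc_sub_def visc_super_def
  proof (intro conjI allI impI cont)
    fix \<phi> x assume \<phi>: "C1_fun \<phi>" and "\<exists>e>0. \<forall>y. \<bar>y - x\<bar> < e \<longrightarrow> w y - \<phi> y \<le> w x - \<phi> x"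
    then have "R x \<le> deriv \<phi> x \<and> deriv \<phi> x \<le> L x"
      using touching_from_above_slope_bounds[OF R L C1_fun_has_derivative[OF \<phi>]] by blast
    then show "F (deriv \<phi> x) - V x \<le> lam" using kink[of x] unfolding admissible_kink_def by force
  next
    fix \<phi> x assume \<phi>: "C1_fun \<phi>" and "\<exists>e>0. \<forall>y. \<bar>y - x\<bar> < e \<longrightarrow> w x - \<phi> x \<le> w y - \<phi> y"
    then obtain e where "e > 0" "\<And>y. \<bar>y - x\<bar> < e \<Longrightarrow> - w y - - \<phi> y \<le> - w x - - \<phi> x" by force
    then have "- R x \<le> - deriv \<phi> x \<and> - deriv \<phi> x \<le> - L x"
      using touching_from_above_slope_bounds[OF DERIV_minus[OF R] DERIV_minus[OF L]
          DERIV_minus[OF C1_fun_has_derivative[OF \<phi>]]] by blast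
    then show "lam \<le> F (deriv \<phi> x) - V x" using kink[of x] unfolding admissible_kink_def by force
  qed
qed

section \<open>Comparison and uniqueness of the effective Hamiltonian\<close>

definition periodic_with_slope :: "real \<Rightarrow> (real \<Rightarrow> real) \<Rightarrow> bool" where
  "periodic_with_slope p w \<longleftrightarrow> (\<forall>x. w (x + 1) - p * (x + 1) = w x - p * x)"

lemma periodic_continuous_bounded:
  fixes a :: "real \<Rightarrow> real"
  assumes "\<And>x. a (x + 1) = a x" "continuous_on UNIV a"
  obtains M where "M \<ge> 0" "\<And>x. \<bar>a x\<bar> \<le> M"
proof -
  interpret periodic_fun_simple' a by unfold_locales (rule assms(1))
  have "compact (a ` {0..1})"
    by (rule compact_continuous_image) (use assms(2) continuous_on_subset in auto)
  then obtain M where M: "\<forall>y\<in>a ` {0..1}. \<bar>y\<bar> \<le> M"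
    using compact_imp_bounded bounded_real by metis
  have "\<bar>a x\<bar> \<le> M" for x
  proof -
    have "a x = a (frac x + of_int \<lfloor>x\<rfloor>)" by (simp add: frac_def)
    also have "\<dots> = a (frac x)" by (rule plus_of_int)
    finally show ?thesis using M frac_ge_0[of x] frac_lt_1[of x] by auto
  qed
  then show thesis using that[of M] by (meson abs_ge_zero order_trans)
qed

lemma quadratic_penalty_dominates:
  fixes M p k d :: real
  assumes k: "k > 0" and M: "M \<ge> 0" and d: "1 + (2 * M + \<bar>p\<bar>) / k \<le> d"
  shows "M + \<bar>p\<bar> * d - k * d\<^sup>2 < - M"
proof -
  have "0 \<le> (2 * M + \<bar>p\<bar>) / k" using k M by simp
  then have d1: "1 \<le> d" using d by linarith
  have "k * (1 + (2 * M + \<bar>p\<bar>) / k) \<le> k * d" using d k by simp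
  moreover have "k * (1 + (2 * M + \<bar>p\<bar>) / k) = k + (2 * M + \<bar>p\<bar>)" using k by (simp add: field_simps)
  ultimately have "2 * M + \<bar>p\<bar> < k * d" using k by linarith
  then have "(2 * M + \<bar>p\<bar>) * d < (k * d) * d" using d1 by (simp add: mult_strict_right_mono)
  moreover have "2 * M * 1 \<le> 2 * M * d" using d1 M by (intro mult_left_mono) auto
  ultimately show ?thesis by (simp add: power2_eq_square algebra_simps)
qed

text \<open>The penalized function of the doubling-of-variables argument attains its maximum: it is
  invariant under diagonal integer shifts and tends to \<open>-\<infinity>\<close> away from the diagonal.\<close>

lemma doubling_maximum:
  fixes a b :: "real \<Rightarrow> real" and p k :: real
  assumes pa: "\<And>x. a (x + 1) = a x" and pb: "\<And>x. b (x + 1) = b x"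
    and ca: "continuous_on UNIV a" and cb: "continuous_on UNIV b" and k: "k > 0"
  defines "\<Phi> x y \<equiv> a x - b y + p * (x - y) - k * (x - y)\<^sup>2"
  obtains x0 y0 where "\<And>x y. \<Phi> x y \<le> \<Phi> x0 y0"
proof -
  interpret a: periodic_fun_simple' a by unfold_locales (rule pa)
  interpret b: periodic_fun_simple' b by unfold_locales (rule pb)
  obtain Ma where Ma: "Ma \<ge> 0" "\<And>x. \<bar>a x\<bar> \<le> Ma" using periodic_continuous_bounded[OF pa ca] by blast
  obtain Mb where Mb: "Mb \<ge> 0" "\<And>x. \<bar>b x\<bar> \<le> Mb" using periodic_continuous_bounded[OF pb cb] by blast
  define M where "M = Ma + Mb"
  define R where "R = 1 + (2 * M + \<bar>p\<bar>) / k"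
  have R: "R \<ge> 1" using Ma Mb k by (simp add: R_def M_def)
  have far: "\<Phi> x y < - M" if "\<bar>x - y\<bar> \<ge> R" for x y
  proof -
    have "\<Phi> x y \<le> M + \<bar>p\<bar> * \<bar>x - y\<bar> - k * \<bar>x - y\<bar>\<^sup>2"
      using Ma(2)[of x] Mb(2)[of y] abs_ge_self[of "p * (x - y)"]
      unfolding \<Phi>_def M_def by (simp add: abs_mult)
    moreover have "M + \<bar>p\<bar> * \<bar>x - y\<bar> - k * \<bar>x - y\<bar>\<^sup>2 < - M"
      using Ma Mb that by (intro quadratic_penalty_dominates[OF k]) (simp_all add: M_def R_def)
    ultimately show ?thesis by linarith
  qed
  define S where "S = {0..1::real} \<times> {-R..R + 1}"
  have "continuous_on S (\<lambda>z. \<Phi> (fst z) (snd z))"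
    unfolding \<Phi>_def
    by (intro continuous_intros continuous_on_compose2[OF ca] continuous_on_compose2[OF cb]) auto
  moreover have "compact S" by (simp add: S_def compact_Times)
  moreover have "S \<noteq> {}" using R by (simp add: S_def)
  ultimately obtain z0 where z0: "\<And>z. z \<in> S \<Longrightarrow> \<Phi> (fst z) (snd z) \<le> \<Phi> (fst z0) (snd z0)"
    using continuous_attains_sup[of S "\<lambda>z. \<Phi> (fst z) (snd z)"] by auto
  have "\<Phi> x y \<le> \<Phi> (fst z0) (snd z0)" for x y
  proof -
    have shift: "\<Phi> x y = \<Phi> (frac x) (y - \<lfloor>x\<rfloor>)"
      unfolding \<Phi>_def frac_def using a.plus_of_int[of "x - \<lfloor>x\<rfloor>" "\<lfloor>x\<rfloor>"]
        b.plus_of_int[of "y - \<lfloor>x\<rfloor>" "\<lfloor>x\<rfloor>"] by (simp add: algebra_simps)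
    show ?thesis
    proof (cases "\<bar>frac x - (y - \<lfloor>x\<rfloor>)\<bar> < R")
      case True
      then have "(frac x, y - \<lfloor>x\<rfloor>) \<in> S"
        unfolding S_def mem_Times_iff fst_conv snd_conv atLeastAtMost_iff
        using True[unfolded abs_less_iff] frac_ge_0[of x] frac_lt_1[of x] by linarith
      then show ?thesis using z0[of "(frac x, y - \<lfloor>x\<rfloor>)"] shift by simp
    next
      case False
      then have "\<Phi> x y < - M" using far shift by simp
      also have "- M \<le> \<Phi> 0 0" using Ma(2)[of 0] Mb(2)[of 0] by (simp add: \<Phi>_def M_def)
      also have "\<Phi> 0 0 \<le> \<Phi> (fst z0) (snd z0)" using z0[of "(0, 0)"] R by (simp add: S_def)
      finally show ?thesis by simp
    qed
  qed
  then show thesis using that by blast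
qed

lemma C1_fun_quadratic:
  fixes c k y :: real
  shows "C1_fun (\<lambda>x. c + k * (x - y)\<^sup>2)" "deriv (\<lambda>x. c + k * (x - y)\<^sup>2) x = 2 * k * (x - y)"
proof -
  have d: "((\<lambda>x. c + k * (x - y)\<^sup>2) has_real_derivative 2 * k * (x - y)) (at x)" for x
    by (auto intro!: derivative_eq_intros)
  then have dd: "deriv (\<lambda>x. c + k * (x - y)\<^sup>2) = (\<lambda>x. 2 * k * (x - y))"
    using DERIV_imp_deriv by blast
  show "C1_fun (\<lambda>x. c + k * (x - y)\<^sup>2)" unfolding C1_fun_def dd
    using d by (auto intro!: continuous_intros simp: differentiable_on_def real_differentiable_def)
  show "deriv (\<lambda>x. c + k * (x - y)\<^sup>2) x = 2 * k * (x - y)" by (simp add: dd)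
qed

text \<open>At a maximum point \<open>(x\<^sub>0, y\<^sub>0)\<close> of the penalized function, both viscosity inequalities are
  tested with the same slope \<open>2k(x\<^sub>0 - y\<^sub>0)\<close>, so the value of \<open>F\<close> cancels.\<close>

lemma doubling_viscosity_gap:
  fixes u v V :: "real \<Rightarrow> real"
  assumes sub: "visc_sub F V l1 u" and super: "visc_super F V l2 v"
    and max: "\<And>x y. u x - v y - k * (x - y)\<^sup>2 \<le> u x0 - v y0 - k * (x0 - y0)\<^sup>2"
  shows "l2 - l1 \<le> V x0 - V y0"
proof -
  have "\<exists>e>0. \<forall>x. \<bar>x - x0\<bar> < e \<longrightarrow> u x - (v y0 + k * (x - y0)\<^sup>2) \<le> u x0 - (v y0 + k * (x0 - y0)\<^sup>2)"
    using max[of _ y0] by (intro exI[of _ 1]) (simp add: algebra_simps)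
  then have "F (2 * k * (x0 - y0)) - V x0 \<le> l1"
    using sub C1_fun_quadratic[of "v y0" k y0] unfolding visc_sub_def by metis
  moreover have "\<exists>e>0. \<forall>y. \<bar>y - y0\<bar> < e \<longrightarrow>
      v y0 - (u x0 + - k * (y0 - x0)\<^sup>2) \<le> v y - (u x0 + - k * (y - x0)\<^sup>2)"
    using max[of x0] by (intro exI[of _ 1]) (simp add: power2_commute algebra_simps)
  then have "l2 \<le> F (2 * - k * (y0 - x0)) - V y0"
    using super C1_fun_quadratic[of "u x0" "- k" x0] unfolding visc_super_def by metis
  ultimately show ?thesis by (simp add: algebra_simps)
qed

lemma large_penalty_forces_small_gap:
  fixes \<delta> K M p k d :: real
  assumes \<delta>: "\<delta> > 0" and K: "K \<ge> 0" and M: "M \<ge> 0"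
    and k: "k = (\<bar>p\<bar> * K + M * K\<^sup>2 / \<delta> + 1) / \<delta>" and penalty: "k * d\<^sup>2 \<le> M + \<bar>p\<bar> * \<bar>d\<bar>"
  shows "K * \<bar>d\<bar> < \<delta>"
proof (rule ccontr)
  define z where "z = K * \<bar>d\<bar>"
  assume "\<not> K * \<bar>d\<bar> < \<delta>"
  then have z: "\<delta> \<le> z" "z > 0" using \<delta> by (simp_all add: z_def)
  have "k \<ge> 0" unfolding k using \<delta> K M by simp
  then have "k * \<delta> \<le> k * z" using z by (simp add: mult_left_mono)
  then have "k * \<delta> * z \<le> k * z * z" using z by (simp add: mult_right_mono)
  also have "k * z * z = K\<^sup>2 * (k * d\<^sup>2)"
    by (simp add: z_def power2_eq_square abs_mult_self_eq algebra_simps)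
  also have "\<dots> \<le> K\<^sup>2 * (M + \<bar>p\<bar> * \<bar>d\<bar>)" using penalty by (simp add: mult_left_mono)
  also have "\<dots> = M * K\<^sup>2 + \<bar>p\<bar> * K * z" by (simp add: z_def power2_eq_square algebra_simps)
  finally have upper: "k * \<delta> * z \<le> M * K\<^sup>2 + \<bar>p\<bar> * K * z" .
  have "k * \<delta> = \<bar>p\<bar> * K + M * K\<^sup>2 / \<delta> + 1" using \<delta> by (simp add: k)
  then have "k * \<delta> * z = \<bar>p\<bar> * K * z + M * K\<^sup>2 / \<delta> * z + z" by (simp add: distrib_right)
  moreover have "M * K\<^sup>2 \<le> M * K\<^sup>2 / \<delta> * z"
    using z \<delta> M mult_left_mono[of "1" "z / \<delta>" "M * K\<^sup>2"] by simp
  ultimately show False using upper z by linarith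
qed

lemma comparison_principle:
  fixes u v V :: "real \<Rightarrow> real"
  assumes sub: "visc_sub F V l1 u" and super: "visc_super F V l2 v"
    and pu: "periodic_with_slope p u" and pv: "periodic_with_slope p v"
    and lip: "lipschitz_on K UNIV V"
  shows "l2 \<le> l1"
proof (rule ccontr)
  assume "\<not> l2 \<le> l1"
  then have \<delta>: "l2 - l1 > 0" by simp
  have K: "K \<ge> 0" using lip by (rule lipschitz_on_nonneg)
  define a where "a x = u x - p * x" for x
  define b where "b x = v x - p * x" for x
  have pa: "a (x + 1) = a x" and pb: "b (x + 1) = b x" for x
    using pu pv by (simp_all add: a_def b_def periodic_with_slope_def)
  have ca: "continuous_on UNIV a" and cb: "continuous_on UNIV b"
    using sub super unfolding a_def b_def visc_sub_def visc_super_def by (auto intro!: continuous_intros)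
  obtain Mb where Mb: "Mb \<ge> 0" "\<And>x. \<bar>b x\<bar> \<le> Mb" using periodic_continuous_bounded[OF pb cb] by blast
  define k where "k = (\<bar>p\<bar> * K + 2 * Mb * K\<^sup>2 / (l2 - l1) + 1) / (l2 - l1)"
  have k: "k > 0"
    unfolding k_def using \<delta> K Mb by (intro divide_pos_pos add_nonneg_pos add_nonneg_nonneg) auto
  have "u x - v y - k * (x - y)\<^sup>2 = a x - b y + p * (x - y) - k * (x - y)\<^sup>2" for x y
    by (simp add: a_def b_def algebra_simps)
  then obtain x0 y0 where max: "\<And>x y. u x - v y - k * (x - y)\<^sup>2 \<le> u x0 - v y0 - k * (x0 - y0)\<^sup>2"
    using doubling_maximum[OF pa pb ca cb k, of p] by metis
  have "k * (x0 - y0)\<^sup>2 \<le> b x0 - b y0 + p * (x0 - y0)"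
    using max[of x0 x0] by (simp add: a_def b_def algebra_simps)
  then have "k * (x0 - y0)\<^sup>2 \<le> 2 * Mb + \<bar>p\<bar> * \<bar>x0 - y0\<bar>"
    using Mb(2)[of x0] Mb(2)[of y0] abs_ge_self[of "p * (x0 - y0)"] by (simp add: abs_mult)
  then have "K * \<bar>x0 - y0\<bar> < l2 - l1"
    using large_penalty_forces_small_gap[OF \<delta> K _ k_def] Mb by simp
  moreover have "l2 - l1 \<le> V x0 - V y0" by (rule doubling_viscosity_gap[OF sub super max])
  ultimately show False using lipschitz_onD[OF lip, of x0 y0] by (simp add: dist_real_def)
qed

definition cell_problem_solvable :: "(real \<Rightarrow> real) \<Rightarrow> real \<Rightarrow> real \<Rightarrow> real \<Rightarrow> bool" where
  "cell_problem_solvable F s p lam \<longleftrightarrow> (\<exists>w. visc_sol F (Vr s) lam w \<and> periodic_with_slope p w)"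

definition tent :: "real \<Rightarrow> real \<Rightarrow> real" where
  "tent s t = min (t / s) ((1 - t) / (1 - s))"

text \<open>On \<open>[0, 1]\<close> the tent reaches level \<open>c \<in> [0, 1]\<close> exactly at \<open>rise s c\<close> and \<open>fall s c\<close>.\<close>

definition rise :: "real \<Rightarrow> real \<Rightarrow> real" where "rise s c = s * c"
definition fall :: "real \<Rightarrow> real \<Rightarrow> real" where "fall s c = 1 - (1 - s) * c"

lemma rise_fall_simps [simp]: "rise s 0 = 0" "fall s 0 = 1" "rise s 1 = s" "fall s 1 = s"
  by (simp_all add: rise_def fall_def)

context
  fixes s :: real
  assumes s: "0 < s" "s < 1"
begin

lemma Vr_eq_tent_frac: "Vr s x = tent s (frac x)"
proof -
  have t: "0 \<le> frac x" "frac x < 1" by (auto simp: frac_lt_1)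
  show ?thesis
  proof (cases "frac x \<le> s")
    case True
    then have "frac x / s \<le> 1" "1 \<le> (1 - frac x) / (1 - s)" using s t
      by (auto simp: divide_le_eq_1 le_divide_eq_1)
    then show ?thesis using True by (simp add: Vr_def tent_def Let_def)
  next
    case False
    then have "frac x / s \<ge> 1" "1 \<ge> (1 - frac x) / (1 - s)" using s t
      by (auto simp: divide_le_eq_1 le_divide_eq_1)
    then show ?thesis using False by (simp add: Vr_def tent_def Let_def min_def)
  qed
qed

lemma tent_0 [simp]: "tent s 0 = 0" and tent_1 [simp]: "tent s 1 = 0"
  using s by (auto simp: tent_def min_def)

lemma tent_on_rise: "t \<le> s \<Longrightarrow> tent s t = t / s"
  using s by (simp add: tent_def min_def) (simp add: field_simps)

lemma tent_on_fall:
  assumes "s \<le> t"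
  shows "tent s t = (1 - t) / (1 - s)"
proof -
  have "(1 - t) * s \<le> t * (1 - s)" using assms by (simp add: algebra_simps)
  then have "(1 - t) / (1 - s) \<le> t / s" using s by (simp add: divide_simps)
  then show ?thesis by (simp add: tent_def)
qed

lemma tent_ge_iff: "c \<le> tent s t \<longleftrightarrow> rise s c \<le> t \<and> t \<le> fall s c"
proof -
  have "c \<le> t / s \<longleftrightarrow> rise s c \<le> t" using s by (simp add: rise_def pos_le_divide_eq mult.commute)
  moreover have "c \<le> (1 - t) / (1 - s) \<longleftrightarrow> c * (1 - s) \<le> 1 - t" using s by (simp add: pos_le_divide_eq)
  moreover have "c * (1 - s) \<le> 1 - t \<longleftrightarrow> t \<le> fall s c" by (auto simp: fall_def algebra_simps)
  ultimately show ?thesis by (simp add: tent_def)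
qed

lemma tent_le_iff: "tent s t \<le> c \<longleftrightarrow> t \<le> rise s c \<or> fall s c \<le> t"
proof -
  have "t / s \<le> c \<longleftrightarrow> t \<le> rise s c" using s by (simp add: rise_def pos_divide_le_eq mult.commute)
  moreover have "(1 - t) / (1 - s) \<le> c \<longleftrightarrow> 1 - t \<le> c * (1 - s)" using s by (simp add: pos_divide_le_eq)
  moreover have "1 - t \<le> c * (1 - s) \<longleftrightarrow> fall s c \<le> t" by (auto simp: fall_def algebra_simps)
  ultimately show ?thesis by (auto simp: tent_def min_le_iff_disj)
qed

lemma tent_nonneg: "0 \<le> t \<Longrightarrow> t \<le> 1 \<Longrightarrow> 0 \<le> tent s t"
  using tent_ge_iff[of 0 t] by (simp add: rise_def fall_def)

lemma tent_rise: "c \<le> 1 \<Longrightarrow> tent s (rise s c) = c"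
  using tent_on_rise[of "rise s c"] s by (simp add: rise_def mult_left_le)

lemma tent_fall:
  assumes "c \<le> 1"
  shows "tent s (fall s c) = c"
proof -
  have "(1 - s) * c \<le> 1 - s" using s assms by (simp add: mult_left_le)
  then have "s \<le> fall s c" by (simp add: fall_def)
  then show ?thesis using s by (simp add: tent_on_fall fall_def)
qed

lemma tent_lipschitz: "\<bar>tent s a - tent s b\<bar> \<le> (1 / s + 1 / (1 - s)) * \<bar>a - b\<bar>"
proof -
  have min_lip: "\<bar>min x1 y1 - min x2 y2\<bar> \<le> \<bar>x1 - x2\<bar> + \<bar>y1 - y2\<bar>" for x1 y1 x2 y2 :: real
    by (simp add: min_def abs_if)
  have "\<bar>a / s - b / s\<bar> = \<bar>a - b\<bar> / s" "\<bar>(1 - a) / (1 - s) - (1 - b) / (1 - s)\<bar> = \<bar>a - b\<bar> / (1 - s)"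
    using s by (simp_all add: diff_divide_distrib[symmetric] abs_minus_commute)
  then show ?thesis
    using min_lip[of "a / s" "(1 - a) / (1 - s)" "b / s" "(1 - b) / (1 - s)"]
    by (simp add: tent_def algebra_simps)
qed

lemma lipschitz_Vr: "lipschitz_on (1 / s + 1 / (1 - s)) UNIV (Vr s)"
proof (rule lipschitz_onI)
  define K where "K = 1 / s + 1 / (1 - s)"
  show "0 \<le> 1 / s + 1 / (1 - s)" using s by simp
  have ordered: "\<bar>Vr s x - Vr s y\<bar> \<le> K * \<bar>x - y\<bar>" if xy: "x \<le> y" for x y
  proof (cases "\<lfloor>x\<rfloor> = \<lfloor>y\<rfloor>")
    case True
    then have "frac x - frac y = x - y" by (simp add: frac_def)
    then show ?thesis using tent_lipschitz[of "frac x" "frac y"] by (simp add: Vr_eq_tent_frac K_def)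
  next
    case False
    \<comment> \<open>pass through the integer \<open>\<lfloor>y\<rfloor>\<close>, where the potential vanishes\<close>
    then have "\<lfloor>x\<rfloor> < \<lfloor>y\<rfloor>" using floor_mono[OF xy] by linarith
    then have "of_int (\<lfloor>x\<rfloor> + 1) \<le> (of_int \<lfloor>y\<rfloor> :: real)" by (simp only: of_int_le_iff)
    then have "1 - frac x \<le> of_int \<lfloor>y\<rfloor> - x" by (simp add: frac_def)
    moreover have "\<bar>tent s (frac x) - tent s 1\<bar> \<le> K * \<bar>frac x - 1\<bar>"
      "\<bar>tent s 0 - tent s (frac y)\<bar> \<le> K * \<bar>0 - frac y\<bar>"
      using tent_lipschitz unfolding K_def by blast+
    moreover have "K \<ge> 0" using s by (simp add: K_def)
    ultimately have "\<bar>Vr s x - Vr s y\<bar> \<le> K * (of_int \<lfloor>y\<rfloor> - x) + K * (y - of_int \<lfloor>y\<rfloor>)"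
      using frac_lt_1[of x] by (simp add: Vr_eq_tent_frac frac_def) (smt (verit) mult_left_mono)
    also have "\<dots> = K * \<bar>x - y\<bar>" using xy by (simp add: algebra_simps)
    finally show ?thesis .
  qed
  show "dist (Vr s x) (Vr s y) \<le> (1 / s + 1 / (1 - s)) * dist x y" for x y
    using ordered[of x y] ordered[of y x]
    by (cases "x \<le> y") (simp_all add: dist_real_def K_def abs_minus_commute)
qed

lemma Vr_reflect: "Vr (1 - s) x = Vr s (- x)"
proof (cases "frac x = 0")
  case True
  moreover have "frac (- x) = 0" using True by (simp add: frac_neg frac_eq_0_iff)
  ultimately show ?thesis unfolding Vr_def Let_def using s by (simp only:) simp
next
  case False
  then have "frac (- x) = 1 - frac x" by (simp add: frac_neg frac_eq_0_iff)
  moreover have "0 \<le> frac x" "frac x < 1" by (simp_all add: frac_lt_1)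
  ultimately show ?thesis
    using s by (cases rule: linorder_cases[of "frac x" "1 - s"]) (auto simp: Vr_def Let_def)
qed

lemma Hbar_eqI:
  assumes "cell_problem_solvable F s p lam"
  shows "Hbar F s p = lam"
  unfolding Hbar_def
proof (rule the_equality)
  obtain w where w: "visc_sol F (Vr s) lam w" "periodic_with_slope p w"
    using assms by (auto simp: cell_problem_solvable_def)
  then show "\<exists>w. visc_sol F (Vr s) lam w \<and> (\<forall>x. w (x + 1) - p * (x + 1) = w x - p * x)"
    by (auto simp: periodic_with_slope_def)
  fix lam' assume "\<exists>w. visc_sol F (Vr s) lam' w \<and> (\<forall>x. w (x + 1) - p * (x + 1) = w x - p * x)"
  then obtain w' where w': "visc_sol F (Vr s) lam' w'" "periodic_with_slope p w'"
    by (auto simp: periodic_with_slope_def)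
  show "lam' = lam"
    using comparison_principle[OF _ _ w(2) w'(2) lipschitz_Vr]
      comparison_principle[OF _ _ w'(2) w(2) lipschitz_Vr] w(1) w'(1)
    by (force simp: visc_sol_def)
qed

end

lemma C1_fun_reflect:
  assumes "C1_fun \<phi>"
  shows "C1_fun (\<lambda>y. \<phi> (- y))" "deriv (\<lambda>y. \<phi> (- y)) y = - deriv \<phi> (- y)"
proof -
  have d: "((\<lambda>y. \<phi> (- y)) has_real_derivative - deriv \<phi> (- y)) (at y)" for y
    using C1_fun_has_derivative[OF assms, of "- y"] DERIV_mirror by fastforce
  then have dd: "deriv (\<lambda>y. \<phi> (- y)) = (\<lambda>y. - deriv \<phi> (- y))"
    using DERIV_imp_deriv by blast
  have "continuous_on UNIV (deriv \<phi>)" using assms by (simp add: C1_fun_def)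
  then have "continuous_on UNIV (\<lambda>y. - deriv \<phi> (- y))"
    by (intro continuous_intros continuous_on_compose2[OF \<open>continuous_on UNIV (deriv \<phi>)\<close>]) auto
  then show "C1_fun (\<lambda>y. \<phi> (- y))" unfolding C1_fun_def dd
    using d by (auto simp: differentiable_on_def real_differentiable_def)
  show "deriv (\<lambda>y. \<phi> (- y)) y = - deriv \<phi> (- y)" by (simp add: dd)
qed

lemma local_extremum_reflect:
  fixes x :: real and w \<phi> :: "real \<Rightarrow> real"
  assumes "\<exists>e>0. \<forall>y. \<bar>y - x\<bar> < e \<longrightarrow> P (w (- y) - \<phi> y)"
  shows "\<exists>e>0. \<forall>z. \<bar>z - - x\<bar> < e \<longrightarrow> P (w z - \<phi> (- z))"
proof -
  obtain e where e: "e > 0" "\<And>y. \<bar>y - x\<bar> < e \<Longrightarrow> P (w (- y) - \<phi> y)" using assms by blast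
  have "P (w z - \<phi> (- z))" if "\<bar>z - - x\<bar> < e" for z
  proof -
    have "\<bar>- z - x\<bar> < e" using that by linarith
    then show ?thesis using e(2)[of "- z"] by simp
  qed
  then show ?thesis using e(1) by blast
qed

lemma visc_sol_reflect:
  fixes V w :: "real \<Rightarrow> real"
  assumes even: "\<And>q. F (- q) = F q" and sol: "visc_sol F V lam w"
  shows "visc_sol F (\<lambda>x. V (- x)) lam (\<lambda>x. w (- x))"
proof -
  have "continuous_on UNIV w" using sol by (simp add: visc_sol_def visc_sub_def)
  then have cont: "continuous_on UNIV (\<lambda>x. w (- x))"
    by (intro continuous_on_compose2[OF \<open>continuous_on UNIV w\<close>] continuous_intros) auto
  have sub: "F (deriv \<psi> y) - V y \<le> lam"
    if "C1_fun \<psi>" "\<exists>e>0. \<forall>z. \<bar>z - y\<bar> < e \<longrightarrow> w z - \<psi> z \<le> w y - \<psi> y" for \<psi> y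
    using sol that by (auto simp: visc_sol_def visc_sub_def)
  have super: "lam \<le> F (deriv \<psi> y) - V y"
    if "C1_fun \<psi>" "\<exists>e>0. \<forall>z. \<bar>z - y\<bar> < e \<longrightarrow> w y - \<psi> y \<le> w z - \<psi> z" for \<psi> y
    using sol that by (auto simp: visc_sol_def visc_super_def)
  show ?thesis
    unfolding visc_sol_def visc_sub_def visc_super_def
  proof (intro conjI allI impI cont)
    fix \<phi> x assume \<phi>: "C1_fun \<phi>"
      and "\<exists>e>0. \<forall>y. \<bar>y - x\<bar> < e \<longrightarrow> w (- y) - \<phi> y \<le> w (- x) - \<phi> x"
    then have "\<exists>e>0. \<forall>z. \<bar>z - - x\<bar> < e \<longrightarrow> w z - \<phi> (- z) \<le> w (- x) - \<phi> x"
      by (intro local_extremum_reflect[where P = "\<lambda>r. r \<le> w (- x) - \<phi> x"])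
    then have "\<exists>e>0. \<forall>z. \<bar>z - - x\<bar> < e \<longrightarrow> w z - \<phi> (- z) \<le> w (- x) - \<phi> (- (- x))"
      by simp
    then have "F (deriv (\<lambda>y. \<phi> (- y)) (- x)) - V (- x) \<le> lam"
      by (rule sub[OF C1_fun_reflect(1)[OF \<phi>]])
    then show "F (deriv \<phi> x) - V (- x) \<le> lam" using C1_fun_reflect(2)[OF \<phi>, of "- x"] even by simp
  next
    fix \<phi> x assume \<phi>: "C1_fun \<phi>"
      and "\<exists>e>0. \<forall>y. \<bar>y - x\<bar> < e \<longrightarrow> w (- x) - \<phi> x \<le> w (- y) - \<phi> y"
    then have "\<exists>e>0. \<forall>z. \<bar>z - - x\<bar> < e \<longrightarrow> w (- x) - \<phi> x \<le> w z - \<phi> (- z)"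
      by (intro local_extremum_reflect[where P = "\<lambda>r. w (- x) - \<phi> x \<le> r"])
    then have "\<exists>e>0. \<forall>z. \<bar>z - - x\<bar> < e \<longrightarrow> w (- x) - \<phi> (- (- x)) \<le> w z - \<phi> (- z)"
      by simp
    then have "lam \<le> F (deriv (\<lambda>y. \<phi> (- y)) (- x)) - V (- x)"
      by (rule super[OF C1_fun_reflect(1)[OF \<phi>]])
    then show "lam \<le> F (deriv \<phi> x) - V (- x)" using C1_fun_reflect(2)[OF \<phi>, of "- x"] even by simp
  qed
qed

lemma cell_problem_solvable_reflect:
  assumes even: "\<And>q. F (- q) = F q" and s: "0 < s" "s < 1"
    and "cell_problem_solvable F s p lam"
  shows "cell_problem_solvable F (1 - s) (- p) lam"
proof -
  obtain w where w: "visc_sol F (Vr s) lam w" "periodic_with_slope p w"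
    using assms(4) by (auto simp: cell_problem_solvable_def)
  have "Vr (1 - s) = (\<lambda>x. Vr s (- x))" using Vr_reflect[OF s] by blast
  then have "visc_sol F (Vr (1 - s)) lam (\<lambda>x. w (- x))"
    using visc_sol_reflect[OF even w(1)] by simp
  moreover have "periodic_with_slope (- p) (\<lambda>x. w (- x))"
    unfolding periodic_with_slope_def
  proof
    fix x :: real
    have "w (- 1 - x + 1) - p * (- 1 - x + 1) = w (- 1 - x) - p * (- 1 - x)"
      using w(2) unfolding periodic_with_slope_def by blast
    then show "w (- (x + 1)) - - p * (x + 1) = w (- x) - - p * x" by (simp add: algebra_simps)
  qed
  ultimately show ?thesis by (auto simp: cell_problem_solvable_def)
qed

lemma filtermap_at_left_shift: "filtermap (\<lambda>x. x - d) (at_left a) = at_left (a - d)"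
  for a d :: real
  by (simp add: filter_eq_iff eventually_filtermap eventually_at_filter filtermap_nhds_shift[symmetric])

lemma has_real_derivative_at_right_shift:
  assumes "(f has_real_derivative D) (at_right (x - c))"
  shows "((\<lambda>y. f (y - c)) has_real_derivative D) (at_right x)"
proof -
  have "((\<lambda>z. (f z - f (x - c)) / (z - (x - c))) \<longlongrightarrow> D) (at_right (x - c))"
    using assms by (simp add: has_field_derivative_iff)
  then have "((\<lambda>y. (f (y - c) - f (x - c)) / (y - c - (x - c))) \<longlongrightarrow> D) (at_right x)"
    unfolding filtermap_at_right_shift[symmetric] filterlim_filtermap .
  then show ?thesis by (simp add: has_field_derivative_iff)
qed

lemma has_real_derivative_at_left_shift:
  assumes "(f has_real_derivative D) (at_left (x - c))"
  shows "((\<lambda>y. f (y - c)) has_real_derivative D) (at_left x)"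
proof -
  have "((\<lambda>z. (f z - f (x - c)) / (z - (x - c))) \<longlongrightarrow> D) (at_left (x - c))"
    using assms by (simp add: has_field_derivative_iff)
  then have "((\<lambda>y. (f (y - c) - f (x - c)) / (y - c - (x - c))) \<longlongrightarrow> D) (at_left x)"
    unfolding filtermap_at_left_shift[symmetric] filterlim_filtermap .
  then show ?thesis by (simp add: has_field_derivative_iff)
qed

text \<open>A sorted list \<open>ts\<close> of breakpoints in \<open>[0, 1]\<close> cuts \<open>[0, 1]\<close> into the pieces
  \<open>0, \<dots>, length ts\<close>; a breakpoint belongs to the piece on its right.\<close>

definition piece :: "real list \<Rightarrow> real \<Rightarrow> nat" where
  "piece ts t = length (filter (\<lambda>a. a \<le> t) ts)"

definition piece_left :: "real list \<Rightarrow> real \<Rightarrow> nat" where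
  "piece_left ts t = length (filter (\<lambda>a. a < t) ts)"

definition piecewise :: "real list \<Rightarrow> (nat \<Rightarrow> real \<Rightarrow> real) \<Rightarrow> real \<Rightarrow> real" where
  "piecewise ts H t = H (piece ts t) t"

definition mean_slope :: "real list \<Rightarrow> (nat \<Rightarrow> real \<Rightarrow> real) \<Rightarrow> real" where
  "mean_slope ts H = integral {0..1} (piecewise ts H)"

definition slope_primitive :: "real list \<Rightarrow> (nat \<Rightarrow> real \<Rightarrow> real) \<Rightarrow> real \<Rightarrow> real" where
  "slope_primitive ts H x = mean_slope ts H * \<lfloor>x\<rfloor> + integral {0..frac x} (piecewise ts H)"

fun piece_integrals :: "real \<Rightarrow> real list \<Rightarrow> (nat \<Rightarrow> real \<Rightarrow> real) \<Rightarrow> real" where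
  "piece_integrals a [] H = integral {a..1} (H 0)"
| "piece_integrals a (b # ts) H = integral {a..b} (H 0) + piece_integrals b ts (\<lambda>i. H (Suc i))"

lemma piece_simps [simp]:
  "piece [] t = 0" "piece (a # ts) t = (if a \<le> t then Suc (piece ts t) else piece ts t)"
  "piece_left [] t = 0" "piece_left (a # ts) t = (if a < t then Suc (piece_left ts t) else piece_left ts t)"
  by (simp_all add: piece_def piece_left_def)

lemma piece_eq_0: "(\<And>a. a \<in> set ts \<Longrightarrow> t < a) \<Longrightarrow> piece ts t = 0"
  by (induction ts) (auto simp: not_le)

lemma piece_left_eq_0: "(\<And>a. a \<in> set ts \<Longrightarrow> t \<le> a) \<Longrightarrow> piece_left ts t = 0"
  by (induction ts) (auto simp: not_less)

lemma has_integral_piecewise: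
  assumes "sorted ts" "lo \<le> 1" "\<And>a. a \<in> set ts \<Longrightarrow> lo \<le> a \<and> a \<le> 1"
    and "\<And>i. i \<le> length ts \<Longrightarrow> continuous_on {lo..1} (H i)"
  shows "(piecewise ts H has_integral piece_integrals lo ts H) {lo..1}"
  using assms
proof (induction ts arbitrary: lo H)
  case Nil
  then show ?case
    using integrable_continuous_interval[of lo 1 "H 0"] by (simp add: piecewise_def has_integral_integral)
next
  case (Cons b ts)
  have b: "lo \<le> b" "b \<le> 1" and ts: "\<And>a. a \<in> set ts \<Longrightarrow> b \<le> a \<and> a \<le> 1"
    using Cons.prems by auto
  have "continuous_on {lo..b} (H 0)"
    using continuous_on_subset[OF Cons.prems(4)[of 0]] b by auto
  then have "(H 0 has_integral integral {lo..b} (H 0)) {lo..b}"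
    by (intro integrable_integral integrable_continuous_interval)
  then have left: "(piecewise (b # ts) H has_integral integral {lo..b} (H 0)) {lo..b}"
  proof (rule has_integral_spike_finite[of "{b}", rotated 2])
    fix t assume "t \<in> {lo..b} - {b}"
    then have "piece ts t = 0" using ts by (intro piece_eq_0) fastforce
    then show "piecewise (b # ts) H t = H 0 t" using \<open>t \<in> {lo..b} - {b}\<close> by (simp add: piecewise_def)
  qed simp
  have "(piecewise ts (\<lambda>i. H (Suc i)) has_integral piece_integrals b ts (\<lambda>i. H (Suc i))) {b..1}"
  proof (rule Cons.IH)
    show "continuous_on {b..1} (H (Suc i))" if "i \<le> length ts" for i
      using continuous_on_subset[OF Cons.prems(4)[of "Suc i"]] that b by auto
  qed (use Cons.prems ts b in auto)
  then have right: "(piecewise (b # ts) H has_integral piece_integrals b ts (\<lambda>i. H (Suc i))) {b..1}"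
    by (rule has_integral_spike_finite[of "{}", rotated 2]) (auto simp: piecewise_def)
  show ?case using has_integral_combine[OF b left right] by simp
qed

lemma mean_slope_eq:
  assumes "sorted ts" "set ts \<subseteq> {0..1}" "\<And>i. i \<le> length ts \<Longrightarrow> continuous_on {0..1} (H i)"
  shows "mean_slope ts H = piece_integrals 0 ts H"
proof -
  have "(piecewise ts H has_integral piece_integrals 0 ts H) {0..1}"
    by (rule has_integral_piecewise) (use assms in auto)
  then show ?thesis by (simp add: mean_slope_def integral_unique)
qed

lemma piece_constant_right: "\<exists>b>t. \<forall>r. t < r \<longrightarrow> r < b \<longrightarrow> piece ts r = piece ts t"
proof -
  define b where "b = Min (insert (t + 1) {a \<in> set ts. t < a})"
  have b: "t < b" "\<And>a. a \<in> set ts \<Longrightarrow> t < a \<Longrightarrow> b \<le> a" by (auto simp: b_def)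
  have "piece ts r = piece ts t" if "t < r" "r < b" for r
    unfolding piece_def using b that by (intro arg_cong[where f = length] filter_cong) force+
  then show ?thesis using b(1) by blast
qed

lemma piece_constant_left: "\<exists>b<t. \<forall>r. b < r \<longrightarrow> r < t \<longrightarrow> piece ts r = piece_left ts t"
proof -
  define b where "b = Max (insert (t - 1) {a \<in> set ts. a < t})"
  have b: "b < t" "\<And>a. a \<in> set ts \<Longrightarrow> a < t \<Longrightarrow> a \<le> b" by (auto simp: b_def)
  have "piece ts r = piece_left ts t" if "b < r" "r < t" for r
    unfolding piece_def piece_left_def using b that by (intro arg_cong[where f = length] filter_cong) force+
  then show ?thesis using b(1) by blast
qed

lemma integral_between:
  fixes h :: "real \<Rightarrow> real"
  assumes "continuous_on {lo..hi} h" "lo \<le> a" "a \<le> b" "b \<le> hi"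
  shows "integral {a..b} h = integral {lo..b} h - integral {lo..a} h"
proof -
  have "h integrable_on {lo..b}"
    using continuous_on_subset[OF assms(1)] assms by (intro integrable_continuous_interval) auto
  from Henstock_Kurzweil_Integration.integral_combine[OF assms(2,3) this] show ?thesis by simp
qed

lemma continuous_on_integral_between:
  fixes h :: "real \<Rightarrow> real"
  assumes h: "continuous_on {lo..hi} h" and a: "continuous_on I a" and b: "continuous_on I b"
    and ab: "\<And>r. r \<in> I \<Longrightarrow> lo \<le> a r \<and> a r \<le> b r \<and> b r \<le> hi"
  shows "continuous_on I (\<lambda>r. integral {a r..b r} h)"
proof -
  have G: "continuous_on {lo..hi} (\<lambda>u. integral {lo..u} h)"
    by (intro indefinite_integral_continuous_1 integrable_continuous_interval h)
  have "continuous_on I (\<lambda>r. integral {lo..b r} h - integral {lo..a r} h)"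
    using ab by (intro continuous_intros continuous_on_compose2[OF G] a b) force+
  then show ?thesis
    by (rule continuous_on_cong[THEN iffD1, OF refl, rotated]) (simp add: integral_between[OF h] ab)
qed

lemma continuous_on_piece_integrals:
  fixes lo :: "real \<Rightarrow> real" and fs :: "(real \<Rightarrow> real) list"
  assumes "\<And>i. i \<le> length fs \<Longrightarrow> continuous_on {0..1} (H i)"
    and "continuous_on I lo" "\<And>f. f \<in> set fs \<Longrightarrow> continuous_on I f"
    and "\<And>r. r \<in> I \<Longrightarrow> 0 \<le> lo r \<and> sorted (lo r # map (\<lambda>f. f r) fs @ [1])"
  shows "continuous_on I (\<lambda>r. piece_integrals (lo r) (map (\<lambda>f. f r) fs) H)"
  using assms
proof (induction fs arbitrary: lo H)
  case Nil
  then show ?case by (auto intro!: continuous_on_integral_between)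
next
  case (Cons f fs)
  have "continuous_on I (\<lambda>r. integral {lo r..f r} (H 0))"
    using Cons.prems by (intro continuous_on_integral_between) auto
  moreover have "continuous_on I (\<lambda>r. piece_integrals (f r) (map (\<lambda>f. f r) fs) (\<lambda>i. H (Suc i)))"
  proof (rule Cons.IH)
    fix r assume "r \<in> I"
    then show "0 \<le> f r \<and> sorted (f r # map (\<lambda>f. f r) fs @ [1])" using Cons.prems(4)[of r] by auto
  qed (use Cons.prems in auto)
  ultimately show ?case by (auto intro: continuous_on_add)
qed

lemma IVT_closed_segment:
  fixes f :: "real \<Rightarrow> real"
  assumes "continuous_on (closed_segment a b) f" "y \<in> closed_segment (f a) (f b)"
  obtains x where "x \<in> closed_segment a b" "f x = y"
proof (cases "a \<le> b")
  case True
  then show ?thesis using assms IVT'[of f a y b] IVT2'[of f b y a] that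
    by (auto simp: closed_segment_eq_real_ivl split: if_splits)
next
  case False
  then show ?thesis using assms IVT'[of f b y a] IVT2'[of f a y b] that
    by (auto simp: closed_segment_eq_real_ivl split: if_splits)
qed

lemma closed_segment_real_split:
  fixes a b c y :: real
  shows "y \<in> closed_segment a c \<Longrightarrow> y \<in> closed_segment a b \<or> y \<in> closed_segment b c"
  by (auto simp: closed_segment_eq_real_ivl split: if_splits)

locale piecewise_slope =
  fixes ts :: "real list" and H :: "nat \<Rightarrow> real \<Rightarrow> real"
  assumes sorted: "sorted ts" and breakpoints: "set ts \<subseteq> {0..1}"
    and continuous: "\<And>i. i \<le> length ts \<Longrightarrow> continuous_on {0..1} (H i)"
begin

lemma piece_le_length: "piece ts t \<le> length ts" "piece_left ts t \<le> length ts"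
  by (simp_all add: piece_def piece_left_def)

lemma integrable_piecewise:
  assumes "0 \<le> u" "u \<le> 1"
  shows "piecewise ts H integrable_on {0..u}"
proof -
  have "(piecewise ts H has_integral piece_integrals 0 ts H) {0..1}"
    by (rule has_integral_piecewise) (use sorted breakpoints continuous in auto)
  then show ?thesis using assms by (auto intro: integrable_subinterval_real)
qed

lemma primitive_diff:
  assumes "0 \<le> t" "t \<le> r" "r \<le> 1" "\<And>x. t < x \<Longrightarrow> x < r \<Longrightarrow> piece ts x = j" "j \<le> length ts"
  shows "integral {0..r} (piecewise ts H) - integral {0..t} (piecewise ts H)
    = integral {0..r} (H j) - integral {0..t} (H j)"
proof -
  have "H j integrable_on {0..r}"
    using continuous_on_subset[OF continuous[OF assms(5)]] assms(1-3)
    by (intro integrable_continuous_interval) auto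
  from Henstock_Kurzweil_Integration.integral_combine[OF assms(1,2) this]
  have "integral {0..r} (H j) = integral {0..t} (H j) + integral {t..r} (H j)" by simp
  moreover have "integral {0..r} (piecewise ts H) = integral {0..t} (piecewise ts H) + integral {t..r} (piecewise ts H)"
    using Henstock_Kurzweil_Integration.integral_combine[OF assms(1,2) integrable_piecewise] assms by simp
  moreover have "integral {t..r} (piecewise ts H) = integral {t..r} (H j)"
    by (rule integral_spike[of "{t, r}"]) (use assms(4) in \<open>auto simp: piecewise_def\<close>)
  ultimately show ?thesis by simp
qed

lemma primitive_has_right_derivative:
  assumes "0 \<le> t" "t < 1"
  shows "((\<lambda>u. integral {0..u} (piecewise ts H)) has_real_derivative H (piece ts t) t) (at_right t)"
proof -
  define j where "j = piece ts t"
  obtain b where b: "t < b" "\<And>r. t < r \<Longrightarrow> r < b \<Longrightarrow> piece ts r = j"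
    using piece_constant_right[of t] unfolding j_def by blast
  have j: "j \<le> length ts" by (simp add: j_def piece_le_length)
  have "((\<lambda>u. integral {0..u} (H j)) has_real_derivative H j t) (at t within {t..1})"
    using integral_has_real_derivative[OF continuous[OF j], of t] assms by (auto intro: DERIV_subset)
  then have "((\<lambda>u. integral {0..t} (piecewise ts H) - integral {0..t} (H j) + integral {0..u} (H j))
      has_real_derivative H j t) (at_right t)"
    using assms by (auto intro!: derivative_eq_intros simp: at_within_Icc_at_right)
  moreover have "\<forall>\<^sub>F u in at_right t. integral {0..t} (piecewise ts H) - integral {0..t} (H j)
      + integral {0..u} (H j) = integral {0..u} (piecewise ts H)"
    unfolding eventually_at_right_field
    using primitive_diff[OF assms(1) _ _ _ j] b assms
    by (intro exI[of _ "min b 1"]) (auto simp: algebra_simps)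
  ultimately show ?thesis by (auto simp: j_def has_field_derivative_cong_eventually)
qed

lemma primitive_has_left_derivative:
  assumes "0 < t" "t \<le> 1"
  shows "((\<lambda>u. integral {0..u} (piecewise ts H)) has_real_derivative H (piece_left ts t) t) (at_left t)"
proof -
  define j where "j = piece_left ts t"
  obtain b where b: "b < t" "\<And>r. b < r \<Longrightarrow> r < t \<Longrightarrow> piece ts r = j"
    using piece_constant_left[of t] unfolding j_def by blast
  have j: "j \<le> length ts" by (simp add: j_def piece_le_length)
  have "((\<lambda>u. integral {0..u} (H j)) has_real_derivative H j t) (at t within {0..t})"
    using integral_has_real_derivative[OF continuous[OF j], of t] assms by (auto intro: DERIV_subset)
  then have "((\<lambda>u. integral {0..t} (piecewise ts H) - integral {0..t} (H j) + integral {0..u} (H j))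
      has_real_derivative H j t) (at_left t)"
    using assms by (auto intro!: derivative_eq_intros simp: at_within_Icc_at_left)
  moreover have "\<forall>\<^sub>F u in at_left t. integral {0..t} (piecewise ts H) - integral {0..t} (H j)
      + integral {0..u} (H j) = integral {0..u} (piecewise ts H)"
    unfolding eventually_at_left_field
    using primitive_diff[OF _ _ assms(2) _ j] b assms
    by (intro exI[of _ "max b 0"]) (auto simp: algebra_simps)
  ultimately show ?thesis by (auto simp: j_def has_field_derivative_cong_eventually)
qed

lemma slope_primitive_has_right_derivative:
  "(slope_primitive ts H has_real_derivative H (piece ts (frac x)) (frac x)) (at_right x)"
proof -
  define c where "c = real_of_int \<lfloor>x\<rfloor>"
  have "((\<lambda>u. integral {0..u} (piecewise ts H)) has_real_derivative H (piece ts (frac x)) (frac x))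
      (at_right (x - c))"
  proof -
    have "x - c = frac x" by (simp add: c_def frac_def)
    then show ?thesis using primitive_has_right_derivative[of "frac x"] frac_lt_1[of x] by simp
  qed
  then have deriv: "((\<lambda>y. mean_slope ts H * c + integral {0..y - c} (piecewise ts H))
      has_real_derivative H (piece ts (frac x)) (frac x)) (at_right x)"
    using has_real_derivative_at_right_shift by (auto intro!: derivative_eq_intros)
  have ev: "\<forall>\<^sub>F y in at_right x. mean_slope ts H * c + integral {0..y - c} (piecewise ts H)
      = slope_primitive ts H y"
    unfolding eventually_at_right_field
  proof (intro exI[of _ "c + 1"] conjI allI impI)
    fix y assume "x < y" "y < c + 1"
    then have "\<lfloor>y\<rfloor> = \<lfloor>x\<rfloor>" using of_int_floor_le[of x] unfolding c_def by (intro floor_unique) linarith+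
    then show "mean_slope ts H * c + integral {0..y - c} (piecewise ts H) = slope_primitive ts H y"
      by (simp add: slope_primitive_def frac_def c_def)
  qed (simp add: c_def)
  have eq: "mean_slope ts H * c + integral {0..x - c} (piecewise ts H) = slope_primitive ts H x"
    by (simp add: slope_primitive_def frac_def c_def)
  show ?thesis using has_field_derivative_cong_eventually[OF ev eq] deriv by simp
qed

definition left_slope :: "real \<Rightarrow> real" where
  "left_slope x = (if frac x = 0 then H (piece_left ts 1) 1 else H (piece_left ts (frac x)) (frac x))"

text \<open>At an integer the left derivative is read off at the right end of the previous period;
  this uses that the primitive gains exactly \<open>mean_slope ts H\<close> over a period.\<close>

lemma slope_primitive_has_left_derivative:
  "(slope_primitive ts H has_real_derivative left_slope x) (at_left x)"
proof -
  define n where "n = (if frac x = 0 then \<lfloor>x\<rfloor> - 1 else \<lfloor>x\<rfloor>)"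
  define c where "c = real_of_int n"
  have "c < x \<and> x \<le> c + 1"
  proof (cases "frac x = 0")
    case True
    then show ?thesis by (simp add: c_def n_def frac_def del: frac_eq_0_iff)
  next
    case False
    then have "x \<noteq> real_of_int \<lfloor>x\<rfloor>" by (simp add: frac_def)
    then have "real_of_int \<lfloor>x\<rfloor> < x" using of_int_floor_le[of x] by linarith
    then show ?thesis using False by (simp add: c_def n_def del: frac_eq_0_iff)
  qed
  then have x: "c < x" "x \<le> c + 1" by simp_all
  have "((\<lambda>u. integral {0..u} (piecewise ts H)) has_real_derivative left_slope x) (at_left (x - c))"
    using primitive_has_left_derivative[of "x - c"] x
    by (auto simp: left_slope_def c_def n_def frac_def)
  then have deriv: "((\<lambda>y. mean_slope ts H * c + integral {0..y - c} (piecewise ts H))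
      has_real_derivative left_slope x) (at_left x)"
    using has_real_derivative_at_left_shift by (auto intro!: derivative_eq_intros)
  have ev: "\<forall>\<^sub>F y in at_left x. mean_slope ts H * c + integral {0..y - c} (piecewise ts H)
      = slope_primitive ts H y"
    unfolding eventually_at_left_field
  proof (intro exI[of _ c] conjI allI impI)
    fix y assume "c < y" "y < x"
    then have "\<lfloor>y\<rfloor> = n" using x unfolding c_def by (intro floor_unique) auto
    then show "mean_slope ts H * c + integral {0..y - c} (piecewise ts H) = slope_primitive ts H y"
      by (simp add: slope_primitive_def frac_def c_def)
  qed (use x in simp)
  have eq: "mean_slope ts H * c + integral {0..x - c} (piecewise ts H) = slope_primitive ts H x"
    using frac_eq_0_iff[of x] by (auto simp: slope_primitive_def frac_def c_def n_def mean_slope_def algebra_simps)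
  show ?thesis using has_field_derivative_cong_eventually[OF ev eq] deriv by simp
qed

lemma periodic_slope_primitive: "periodic_with_slope (mean_slope ts H) (slope_primitive ts H)"
  by (simp add: periodic_with_slope_def slope_primitive_def frac_1_eq algebra_simps)

lemma cell_problem_solvable_slope_primitive:
  assumes s: "0 < s" "s < 1"
    and interior: "\<And>t. 0 < t \<Longrightarrow> t < 1 \<Longrightarrow>
      admissible_kink F (H (piece_left ts t) t) (H (piece ts t) t) (lam + tent s t)"
    and endpoint: "admissible_kink F (H (piece_left ts 1) 1) (H (piece ts 0) 0) lam"
  shows "cell_problem_solvable F s (mean_slope ts H) lam"
proof -
  have "admissible_kink F (left_slope x) (H (piece ts (frac x)) (frac x)) (lam + Vr s x)" for x
  proof (cases "frac x = 0")
    case True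
    then show ?thesis
      using endpoint tent_0[OF s] by (simp add: left_slope_def Vr_eq_tent_frac[OF s] del: frac_eq_0_iff)
  next
    case False
    then have "0 < frac x" "frac x < 1" by (auto simp: frac_lt_1 order_le_neq_trans)
    then show ?thesis using interior False by (simp add: left_slope_def Vr_eq_tent_frac[OF s])
  qed
  then have "visc_sol F (Vr s) lam (slope_primitive ts H)"
    by (rule visc_sol_of_one_sided_derivatives[OF slope_primitive_has_right_derivative
          slope_primitive_has_left_derivative])
  then show ?thesis using periodic_slope_primitive by (auto simp: cell_problem_solvable_def)
qed

end

section \<open>The three monotone branches of \<open>F\<close>\<close>

locale three_branch_hamiltonian =
  fixes F :: "real \<Rightarrow> real" and \<theta>1 \<theta>2 \<theta>3 :: real
  assumes continuous_F: "continuous_on UNIV F"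
    and even: "\<And>x. F (- x) = F x"
    and th: "0 < \<theta>3" "\<theta>3 < \<theta>2" "\<theta>2 < \<theta>1"
    and vals: "F 0 = 0" "F \<theta>2 = 1/2" "F \<theta>1 = 1/3" "F \<theta>3 = 1/3"
    and coercive: "filterlim F at_top at_top"
    and mono_low: "strict_mono_on {0..\<theta>2} F"
    and mono_high: "strict_mono_on {\<theta>1..} F"
    and anti_mid: "strict_antimono_on {\<theta>2..\<theta>1} F"
begin

abbreviation "\<psi>1 \<equiv> psi1 F \<theta>1"
abbreviation "\<psi>3 \<equiv> psi3 F \<theta>2"
definition "\<psi>2 = the_inv_into {\<theta>2..\<theta>1} F"

lemma F_abs: "F q = F \<bar>q\<bar>"
  by (cases "q \<ge> 0") (auto simp: even)

lemma F_less_low: "0 \<le> x \<Longrightarrow> x < y \<Longrightarrow> y \<le> \<theta>2 \<Longrightarrow> F x < F y"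
  using mono_low unfolding monotone_on_def by auto

lemma F_less_high: "\<theta>1 \<le> x \<Longrightarrow> x < y \<Longrightarrow> F x < F y"
  using mono_high unfolding monotone_on_def by auto

lemma F_greater_mid: "\<theta>2 \<le> x \<Longrightarrow> x < y \<Longrightarrow> y \<le> \<theta>1 \<Longrightarrow> F y < F x"
  using anti_mid unfolding monotone_on_def by auto

lemma F_le_low: "0 \<le> x \<Longrightarrow> x \<le> y \<Longrightarrow> y \<le> \<theta>2 \<Longrightarrow> F x \<le> F y"
  using F_less_low[of x y] by (cases "x = y") auto

lemma F_le_high: "\<theta>1 \<le> x \<Longrightarrow> x \<le> y \<Longrightarrow> F x \<le> F y"
  using F_less_high[of x y] by (cases "x = y") auto

lemma F_ge_mid: "\<theta>2 \<le> x \<Longrightarrow> x \<le> y \<Longrightarrow> y \<le> \<theta>1 \<Longrightarrow> F y \<le> F x"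
  using F_greater_mid[of x y] by (cases "x = y") auto

lemma inj_on_F: "inj_on F {0..\<theta>2}" "inj_on F {\<theta>2..\<theta>1}" "inj_on F {\<theta>1..}"
proof -
  show "inj_on F {0..\<theta>2}" "inj_on F {\<theta>1..}"
    using mono_low mono_high by (simp_all add: strict_mono_on_imp_inj_on)
  show "inj_on F {\<theta>2..\<theta>1}"
  proof (rule inj_onI)
    fix x y assume "x \<in> {\<theta>2..\<theta>1}" "y \<in> {\<theta>2..\<theta>1}" "F x = F y"
    then show "x = y" using F_greater_mid[of x y] F_greater_mid[of y x] by (cases x y rule: linorder_cases) auto
  qed
qed

lemma continuous_on_F: "continuous_on S F"
  using continuous_F continuous_on_subset by blast

lemma psi1: assumes "1/3 \<le> v" shows "\<theta>1 \<le> \<psi>1 v" "F (\<psi>1 v) = v"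
proof -
  have "eventually (\<lambda>x. v \<le> F x) at_top" using coercive by (simp add: filterlim_at_top)
  then obtain N where N: "\<And>x. N \<le> x \<Longrightarrow> v \<le> F x" by (auto simp: eventually_at_top_linorder)
  then obtain x where x: "\<theta>1 \<le> x" "F x = v"
    using IVT'[of F \<theta>1 v "max N \<theta>1"] assms vals continuous_on_F by force
  have "\<psi>1 v = x" unfolding psi1_def by (rule the_inv_into_f_eq[OF inj_on_F(3)]) (use x in auto)
  then show "\<theta>1 \<le> \<psi>1 v" "F (\<psi>1 v) = v" using x by auto
qed

lemma psi1_eqI: "\<theta>1 \<le> x \<Longrightarrow> F x = v \<Longrightarrow> \<psi>1 v = x"
  unfolding psi1_def by (rule the_inv_into_f_eq[OF inj_on_F(3)]) auto

lemma psi3: assumes "0 \<le> v" "v \<le> 1/2" shows "0 \<le> \<psi>3 v" "\<psi>3 v \<le> \<theta>2" "F (\<psi>3 v) = v"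
proof -
  obtain x where x: "0 \<le> x" "x \<le> \<theta>2" "F x = v"
    using IVT'[of F 0 v \<theta>2] assms vals th continuous_on_F by force
  have "\<psi>3 v = x" unfolding psi3_def by (rule the_inv_into_f_eq[OF inj_on_F(1)]) (use x in auto)
  then show "0 \<le> \<psi>3 v" "\<psi>3 v \<le> \<theta>2" "F (\<psi>3 v) = v" using x by auto
qed

lemma psi3_eqI: "0 \<le> x \<Longrightarrow> x \<le> \<theta>2 \<Longrightarrow> F x = v \<Longrightarrow> \<psi>3 v = x"
  unfolding psi3_def by (rule the_inv_into_f_eq[OF inj_on_F(1)]) auto

lemma psi2: assumes "1/3 \<le> v" "v \<le> 1/2" shows "\<theta>2 \<le> \<psi>2 v" "\<psi>2 v \<le> \<theta>1" "F (\<psi>2 v) = v"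
proof -
  obtain x where x: "\<theta>2 \<le> x" "x \<le> \<theta>1" "F x = v"
    using IVT2'[of F \<theta>1 v \<theta>2] assms vals th continuous_on_F by force
  have "\<psi>2 v = x" unfolding \<psi>2_def by (rule the_inv_into_f_eq[OF inj_on_F(2)]) (use x in auto)
  then show "\<theta>2 \<le> \<psi>2 v" "\<psi>2 v \<le> \<theta>1" "F (\<psi>2 v) = v" using x by auto
qed

lemma psi2_eqI: "\<theta>2 \<le> x \<Longrightarrow> x \<le> \<theta>1 \<Longrightarrow> F x = v \<Longrightarrow> \<psi>2 v = x"
  unfolding \<psi>2_def by (rule the_inv_into_f_eq[OF inj_on_F(2)]) auto

lemma psi_values: "\<psi>1 (1/3) = \<theta>1" "\<psi>3 (1/3) = \<theta>3" "\<psi>3 (1/2) = \<theta>2" "\<psi>3 0 = 0"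
  "\<psi>2 (1/2) = \<theta>2" "\<psi>2 (1/3) = \<theta>1"
  using psi1_eqI psi3_eqI psi2_eqI vals th by auto

lemma psi1_mono: assumes "1/3 \<le> u" "u \<le> v" shows "\<psi>1 u \<le> \<psi>1 v"
proof (rule ccontr)
  assume "\<not> ?thesis"
  then have "F (\<psi>1 v) < F (\<psi>1 u)" using F_less_high[of "\<psi>1 v" "\<psi>1 u"] psi1[of v] assms by force
  then show False using psi1 assms by auto
qed

lemma continuous_on_psi3: "continuous_on {0..1/2} \<psi>3"
proof -
  have "{0..1/2} = F ` {0..\<theta>2}"
  proof (intro equalityI subsetI)
    fix v :: real assume "v \<in> {0..1/2}"
    then show "v \<in> F ` {0..\<theta>2}" using psi3[of v] by (auto intro!: image_eqI[of _ _ "\<psi>3 v"])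
  qed (use F_le_low[of 0] F_le_low[of _ \<theta>2] vals in auto)
  then show ?thesis
    unfolding psi3_def using continuous_on_inv_into[OF continuous_on_F _ inj_on_F(1)] by simp
qed

lemma continuous_on_psi2: "continuous_on {1/3..1/2} \<psi>2"
proof -
  have "{1/3..1/2} = F ` {\<theta>2..\<theta>1}"
  proof (intro equalityI subsetI)
    fix v :: real assume "v \<in> {1/3..1/2}"
    then show "v \<in> F ` {\<theta>2..\<theta>1}" using psi2[of v] by (auto intro!: image_eqI[of _ _ "\<psi>2 v"])
  qed (use F_ge_mid[of \<theta>2] F_ge_mid[of _ \<theta>1] vals in auto)
  then show ?thesis
    unfolding \<psi>2_def using continuous_on_inv_into[OF continuous_on_F _ inj_on_F(2)] by simp
qed

lemma continuous_on_psi1: assumes "\<theta>1 \<le> b" shows "continuous_on {1/3..F b} \<psi>1"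
proof -
  have "continuous_on (F ` {\<theta>1..b}) (the_inv_into {\<theta>1..b} F)"
    by (rule continuous_on_inv_into[OF continuous_on_F]) (auto intro: inj_on_subset[OF inj_on_F(3)])
  moreover have "{1/3..F b} \<subseteq> F ` {\<theta>1..b}"
  proof
    fix v assume v: "v \<in> {1/3..F b}"
    then have "\<psi>1 v \<le> b" using psi1[of v] F_less_high[of b "\<psi>1 v"] assms by force
    then show "v \<in> F ` {\<theta>1..b}" using psi1[of v] v by (auto intro!: image_eqI[of _ _ "\<psi>1 v"])
  qed
  moreover have "the_inv_into {\<theta>1..b} F v = \<psi>1 v" if v: "v \<in> {1/3..F b}" for v
  proof -
    obtain x where "x \<in> {\<theta>1..b}" "v = F x" using v \<open>{1/3..F b} \<subseteq> F ` {\<theta>1..b}\<close> by blast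
    then show ?thesis
      using the_inv_into_f_f[OF inj_on_subset[OF inj_on_F(3)], of "{\<theta>1..b}" x] psi1_eqI[of x v] by auto
  qed
  ultimately show ?thesis using continuous_on_subset continuous_on_cong[OF refl] by blast
qed

text \<open>The branches \<open>\<psi>\<^sub>i\<close>, precomposed with the clamping to their domains, so that they are
  continuous on all of \<open>\<real>\<close>.\<close>

definition "branch1 v = \<psi>1 (max (1/3) v)"
definition "branch2 v = \<psi>2 (max (1/3) (min (1/2) v))"
definition "branch3 v = \<psi>3 (max 0 (min (1/2) v))"

lemma continuous_branch3: "continuous_on UNIV branch3"
  unfolding branch3_def by (rule continuous_on_compose2[OF continuous_on_psi3]) (auto intro!: continuous_intros)

lemma continuous_branch2: "continuous_on UNIV branch2"
  unfolding branch2_def by (rule continuous_on_compose2[OF continuous_on_psi2]) (auto intro!: continuous_intros)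

lemma continuous_branch1: "continuous_on UNIV branch1"
proof -
  have "isCont branch1 x" for x
  proof -
    obtain b where b: "\<theta>1 \<le> b" "max x 1 + 1 \<le> F b"
      using psi1[of "max x 1 + 1"] by (intro that[of "\<psi>1 (max x 1 + 1)"]) auto
    have "continuous_on {..<F b} branch1" unfolding branch1_def
      by (rule continuous_on_compose2[OF continuous_on_psi1[OF b(1)]]) (use b in \<open>auto intro!: continuous_intros\<close>)
    moreover have "x \<in> {..<F b}" using b by auto
    ultimately show ?thesis using continuous_on_eq_continuous_at[of "{..<F b}" branch1] by auto
  qed
  then show ?thesis by (simp add: continuous_at_imp_continuous_on)
qed

lemma branch1_eq: "1/3 \<le> v \<Longrightarrow> branch1 v = \<psi>1 v"
  by (simp add: branch1_def max_def)

lemma branch2_eq: "1/3 \<le> v \<Longrightarrow> v \<le> 1/2 \<Longrightarrow> branch2 v = \<psi>2 v"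
  unfolding branch2_def by (rule arg_cong[where f = \<psi>2]) linarith

lemma branch3_eq: "0 \<le> v \<Longrightarrow> v \<le> 1/2 \<Longrightarrow> branch3 v = \<psi>3 v"
  unfolding branch3_def by (rule arg_cong[where f = \<psi>3]) linarith

lemma F_branch1: "1/3 \<le> v \<Longrightarrow> F (branch1 v) = v \<and> F (- branch1 v) = v"
  using psi1 branch1_eq even by simp

lemma F_branch2: "1/3 \<le> v \<Longrightarrow> v \<le> 1/2 \<Longrightarrow> F (branch2 v) = v \<and> F (- branch2 v) = v"
  using psi2 branch2_eq even by simp

lemma F_branch3: "0 \<le> v \<Longrightarrow> v \<le> 1/2 \<Longrightarrow> F (branch3 v) = v \<and> F (- branch3 v) = v"
  using psi3 branch3_eq even by simp

lemma branch_bounds: "\<theta>1 \<le> branch1 v" "\<theta>2 \<le> branch2 v" "branch2 v \<le> \<theta>1" "0 \<le> branch3 v" "branch3 v \<le> \<theta>2"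
  using psi1[of "max (1/3) v"] psi2[of "max (1/3) (min (1/2) v)"] psi3[of "max 0 (min (1/2) v)"]
  by (auto simp: branch1_def branch2_def branch3_def)

lemma branch_values: "branch3 (1/3) = \<theta>3" "branch1 (1/3) = \<theta>1" "branch3 (1/2) = \<theta>2"
  "branch2 (1/2) = \<theta>2" "branch2 (1/3) = \<theta>1" "branch3 0 = 0"
  using psi_values branch1_eq branch2_eq branch3_eq by auto

lemma F_ge_between_low_mid:
  assumes "1/3 \<le> v" "v \<le> 1/2" "\<psi>3 v \<le> \<bar>q\<bar>" "\<bar>q\<bar> \<le> \<psi>2 v"
  shows "v \<le> F q"
proof (cases "\<bar>q\<bar> \<le> \<theta>2")
  case True
  then show ?thesis using F_le_low[of "\<psi>3 v" "\<bar>q\<bar>"] psi3[of v] assms F_abs[of q] by auto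
next
  case False
  then show ?thesis using F_ge_mid[of "\<bar>q\<bar>" "\<psi>2 v"] psi2[of v] assms F_abs[of q] by auto
qed

lemma F_le_between_mid_high:
  assumes "1/3 \<le> v" "v \<le> 1/2" "\<psi>2 v \<le> \<bar>q\<bar>" "\<bar>q\<bar> \<le> \<psi>1 v"
  shows "F q \<le> v"
proof (cases "\<bar>q\<bar> \<le> \<theta>1")
  case True
  then show ?thesis using F_ge_mid[of "\<psi>2 v" "\<bar>q\<bar>"] psi2[of v] assms F_abs[of q] by auto
next
  case False
  then show ?thesis using F_le_high[of "\<bar>q\<bar>" "\<psi>1 v"] psi1[of v] assms F_abs[of q] by auto
qed

lemma F_le_below_low: "0 \<le> v \<Longrightarrow> v \<le> 1/2 \<Longrightarrow> \<bar>q\<bar> \<le> \<psi>3 v \<Longrightarrow> F q \<le> v"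
  using F_le_low[of "\<bar>q\<bar>" "\<psi>3 v"] psi3[of v] F_abs[of q] by auto

lemma F_le_below_high:
  assumes "1/2 \<le> v" "\<bar>q\<bar> \<le> \<psi>1 v"
  shows "F q \<le> v"
proof -
  consider "\<bar>q\<bar> \<le> \<theta>2" | "\<theta>2 \<le> \<bar>q\<bar>" "\<bar>q\<bar> \<le> \<theta>1" | "\<theta>1 \<le> \<bar>q\<bar>" by linarith
  then show ?thesis
  proof cases
    case 1 then show ?thesis using F_le_low[of "\<bar>q\<bar>" \<theta>2] vals assms F_abs[of q] by auto
  next
    case 2 then show ?thesis using F_ge_mid[of \<theta>2 "\<bar>q\<bar>"] vals assms F_abs[of q] by auto
  next
    case 3 then show ?thesis using F_le_high[of "\<bar>q\<bar>" "\<psi>1 v"] psi1[of v] assms F_abs[of q] by auto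
  qed
qed

text \<open>Kinks between branches: in \<open>kink_i_j\<close> the derivative jumps from branch \<open>i\<close> on the left
  to branch \<open>j\<close> on the right, and \<open>n\<close> marks a negated branch.\<close>

lemma kink_3_1: "admissible_kink F (branch3 (1/3)) (branch1 (1/3)) (1/3)"
  unfolding branch_values
proof (rule admissible_kink_up)
  fix q assume "\<theta>3 \<le> q" "q \<le> \<theta>1"
  then show "1/3 \<le> F q" using F_ge_between_low_mid[of "1/3" q] psi_values th by auto
qed (use th vals in auto)

lemma kink_1_3: "admissible_kink F (branch1 (1/2)) (branch3 (1/2)) (1/2)"
proof (rule admissible_kink_down)
  fix q assume "branch3 (1/2) \<le> q" "q \<le> branch1 (1/2)"
  then show "F q \<le> 1/2" using F_le_between_mid_high[of "1/2" q] psi_values th branch1_eq branch_values by auto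
qed (use branch_values branch_bounds[of "1/2"] th F_branch1 in auto)

lemma kink_1_n3: "admissible_kink F (branch1 (1/2)) (- branch3 (1/2)) (1/2)"
proof (rule admissible_kink_down)
  fix q assume q: "- branch3 (1/2) \<le> q" "q \<le> branch1 (1/2)"
  have "\<bar>q\<bar> \<le> \<psi>1 (1/2)" using q branch_bounds[of "1/2"] th branch1_eq[of "1/2"] by auto
  then show "F q \<le> 1/2" using F_le_below_high[of "1/2" q] by simp
qed (use branch_bounds[of "1/2"] th F_branch1 in auto)

lemma kink_3_n3: assumes "0 \<le> v" "v \<le> 1/2" shows "admissible_kink F (branch3 v) (- branch3 v) v"
proof (rule admissible_kink_down)
  fix q assume "- branch3 v \<le> q" "q \<le> branch3 v"
  then show "F q \<le> v" using F_le_below_low branch3_eq assms by auto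
qed (use branch_bounds[of v] F_branch3 assms in auto)

lemma kink_1_n1: assumes "1/2 \<le> v" shows "admissible_kink F (branch1 v) (- branch1 v) v"
proof (rule admissible_kink_down)
  fix q assume "- branch1 v \<le> q" "q \<le> branch1 v"
  then show "F q \<le> v" using F_le_below_high branch1_eq assms by auto
qed (use branch_bounds[of v] th F_branch1 assms in auto)

lemma kink_n2_n3: assumes "1/3 \<le> v" "v \<le> 1/2" shows "admissible_kink F (- branch2 v) (- branch3 v) v"
proof (rule admissible_kink_up)
  fix q assume "- branch2 v \<le> q" "q \<le> - branch3 v"
  then show "v \<le> F q" using F_ge_between_low_mid branch3_eq branch2_eq assms branch_bounds[of v] by auto
qed (use branch_bounds[of v] F_branch2 assms in auto)

lemma kink_3_2: assumes "1/3 \<le> v" "v \<le> 1/2" shows "admissible_kink F (branch3 v) (branch2 v) v"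
proof (rule admissible_kink_up)
  fix q assume "branch3 v \<le> q" "q \<le> branch2 v"
  then show "v \<le> F q" using F_ge_between_low_mid branch3_eq branch2_eq assms branch_bounds[of v] by auto
qed (use branch_bounds[of v] F_branch3 assms in auto)

lemma kink_n2_n1: assumes "1/3 \<le> v" "v \<le> 1/2" shows "admissible_kink F (- branch2 v) (- branch1 v) v"
proof (rule admissible_kink_down)
  fix q assume "- branch1 v \<le> q" "q \<le> - branch2 v"
  then show "F q \<le> v" using F_le_between_mid_high branch1_eq branch2_eq assms branch_bounds[of v] th by auto
qed (use branch_bounds[of v] F_branch2 assms in auto)

lemma kink_1_2: assumes "1/3 \<le> v" "v \<le> 1/2" shows "admissible_kink F (branch1 v) (branch2 v) v"
proof (rule admissible_kink_down)
  fix q assume "branch2 v \<le> q" "q \<le> branch1 v"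
  then show "F q \<le> v" using F_le_between_mid_high branch1_eq branch2_eq assms branch_bounds[of v] th by auto
qed (use branch_bounds[of v] F_branch1 assms in auto)

lemma kink_n1_n3: "admissible_kink F (- branch1 (1/3)) (- branch3 (1/3)) (1/3)"
  using kink_n2_n3[of "1/3"] branch_values by simp

lemma kink_1_n2: "admissible_kink F (branch1 (1/2)) (- branch2 (1/2)) (1/2)"
  using kink_1_n3 branch_values by simp

end

definition tent_slopes :: "real \<Rightarrow> real \<Rightarrow> (real \<Rightarrow> real) list \<Rightarrow> nat \<Rightarrow> real \<Rightarrow> real" where
  "tent_slopes s lam bs i = (\<lambda>t. (bs ! i) (lam + tent s t))"

definition admissible_tent_kink ::
    "(real \<Rightarrow> real) \<Rightarrow> real \<Rightarrow> real \<Rightarrow> real list \<Rightarrow> (real \<Rightarrow> real) list \<Rightarrow> real \<Rightarrow> bool" where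
  "admissible_tent_kink F s lam ts bs t \<longleftrightarrow>
     admissible_kink F ((bs ! piece_left ts t) (lam + tent s t)) ((bs ! piece ts t) (lam + tent s t)) (lam + tent s t)"

lemma continuous_on_tent: "continuous_on UNIV (tent s)"
  unfolding tent_def divide_inverse by (intro continuous_intros)

lemma continuous_on_tent_slopes:
  assumes "\<And>b. b \<in> set bs \<Longrightarrow> continuous_on UNIV b" "i < length bs"
  shows "continuous_on S (tent_slopes s lam bs i)"
proof -
  have "continuous_on UNIV (bs ! i)" using assms by simp
  then show ?thesis unfolding tent_slopes_def
    by (intro continuous_on_compose2[OF \<open>continuous_on UNIV (bs ! i)\<close>]
        continuous_intros continuous_on_subset[OF continuous_on_tent]) auto
qed

lemma cell_problem_solvable_tent_slopes:
  assumes s: "0 < s" "s < 1"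
    and ts: "sorted ts" "set ts \<subseteq> {0..1}"
    and bs: "length bs = Suc (length ts)" "\<And>b. b \<in> set bs \<Longrightarrow> continuous_on UNIV b"
    and interior: "\<And>t. 0 < t \<Longrightarrow> t < 1 \<Longrightarrow> admissible_tent_kink F s lam ts bs t"
    and endpoint: "admissible_kink F ((bs ! piece_left ts 1) lam) ((bs ! piece ts 0) lam) lam"
  shows "cell_problem_solvable F s (piece_integrals 0 ts (tent_slopes s lam bs)) lam"
proof -
  have "continuous_on {0..1} (tent_slopes s lam bs i)" if "i \<le> length ts" for i
    using bs that by (intro continuous_on_tent_slopes) auto
  then interpret piecewise_slope ts "tent_slopes s lam bs" using ts by unfold_locales
  have "cell_problem_solvable F s (mean_slope ts (tent_slopes s lam bs)) lam"
    using interior endpoint tent_0[OF s] tent_1[OF s]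
    by (intro cell_problem_solvable_slope_primitive[OF s]) (simp_all add: tent_slopes_def admissible_tent_kink_def)
  then show ?thesis using mean_slope_eq ts continuous by simp
qed

lemma integral_split_continuous:
  fixes f :: "real \<Rightarrow> real"
  assumes "continuous_on UNIV f" "a \<le> c" "c \<le> b"
  shows "integral {a..b} f = integral {a..c} f + integral {c..b} f"
  using Henstock_Kurzweil_Integration.integral_combine[OF assms(2,3)
      integrable_continuous_interval[OF continuous_on_subset[OF assms(1)]]] by simp

lemma integral_le_const:
  fixes f :: "real \<Rightarrow> real"
  assumes "a \<le> b" "continuous_on {a..b} f" "\<And>t. a \<le> t \<Longrightarrow> t \<le> b \<Longrightarrow> f t \<le> C"
  shows "integral {a..b} f \<le> C * (b - a)"
proof -
  have "integral {a..b} f \<le> integral {a..b} (\<lambda>t. C)"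
    by (rule integral_le) (use assms in \<open>auto intro: integrable_continuous_interval\<close>)
  then show ?thesis using assms(1) by (simp add: mult.commute)
qed

lemma integral_ge_const:
  fixes f :: "real \<Rightarrow> real"
  assumes "a \<le> b" "continuous_on {a..b} f" "\<And>t. a \<le> t \<Longrightarrow> t \<le> b \<Longrightarrow> C \<le> f t"
  shows "C * (b - a) \<le> integral {a..b} f"
proof -
  have "integral {a..b} (\<lambda>t. C) \<le> integral {a..b} f"
    by (rule integral_le) (use assms in \<open>auto intro: integrable_continuous_interval\<close>)
  then show ?thesis using assms(1) by (simp add: mult.commute)
qed

lemma integral_linear_substitution:
  fixes f :: "real \<Rightarrow> real"
  assumes m: "m > 0" and AB: "A \<le> B" and f: "continuous_on UNIV f"
  shows "integral {A..B} (\<lambda>u. f (m * u + k)) = integral {m * A + k..m * B + k} f / m"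
proof -
  have "(f has_integral integral {m * A + k..m * B + k} f) (cbox (m * A + k) (m * B + k))"
    using integrable_continuous_interval[OF continuous_on_subset[OF f]] by (simp add: has_integral_integral)
  from has_integral_affinity'[OF this m, of k]
  have "((\<lambda>x. f (m * x + k)) has_integral (inverse m * integral {m * A + k..m * B + k} f))
     {inverse m * (m * A)..inverse m * (m * B)}"
    using m by simp
  moreover have "inverse m * (m * A) = A" "inverse m * (m * B) = B" using m by simp_all
  ultimately have "integral {A..B} (\<lambda>u. f (m * u + k)) = inverse m * integral {m * A + k..m * B + k} f"
    by (simp add: integral_unique)
  then show ?thesis by (simp only: divide_inverse mult.commute[of "inverse m"])
qed

context
  fixes s :: real and g :: "real \<Rightarrow> real"
  assumes s: "0 < s" "s < 1" and g: "continuous_on UNIV g"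
begin

lemma integral_tent_rise:
  assumes "0 \<le> \<alpha>" "\<alpha> \<le> \<beta>" "\<beta> \<le> 1"
  shows "integral {rise s \<alpha>..rise s \<beta>} (\<lambda>t. g (c + tent s t)) = s * integral {c + \<alpha>..c + \<beta>} g"
proof -
  have "rise s \<beta> \<le> s" using s assms by (simp add: rise_def mult_left_le)
  then have "integral {rise s \<alpha>..rise s \<beta>} (\<lambda>t. g (c + tent s t))
      = integral {rise s \<alpha>..rise s \<beta>} (\<lambda>t. g ((1 / s) * t + c))"
    by (intro Henstock_Kurzweil_Integration.integral_cong) (simp add: tent_on_rise[OF s] algebra_simps)
  also have "\<dots> = integral {(1 / s) * rise s \<alpha> + c..(1 / s) * rise s \<beta> + c} g / (1 / s)"
    using s assms by (intro integral_linear_substitution g) (auto simp: rise_def mult_left_mono)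
  also have "\<dots> = s * integral {c + \<alpha>..c + \<beta>} g" using s by (simp add: rise_def algebra_simps)
  finally show ?thesis .
qed

lemma integral_tent_fall:
  assumes "0 \<le> \<alpha>" "\<alpha> \<le> \<beta>" "\<beta> \<le> 1"
  shows "integral {fall s \<beta>..fall s \<alpha>} (\<lambda>t. g (c + tent s t)) = (1 - s) * integral {c + \<alpha>..c + \<beta>} g"
proof -
  define h where "h u = g ((1 / (1 - s)) * u + (c + 1 / (1 - s)))" for u
  have e: "(1 / (1 - s)) * (- fall s a) + (c + 1 / (1 - s)) = c + a" for a
  proof -
    have "(1 / (1 - s)) * (- fall s a) = (1 / (1 - s)) * ((1 - s) * a) - 1 / (1 - s)"
      unfolding fall_def minus_diff_eq right_diff_distrib by simp
    also have "(1 / (1 - s)) * ((1 - s) * a) = a" using s by simp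
    finally show ?thesis by simp
  qed
  have "(1 - s) * \<beta> \<le> 1 - s" using s assms by (intro mult_left_le) auto
  then have "s \<le> fall s \<beta>" by (simp add: fall_def)
  then have "integral {fall s \<beta>..fall s \<alpha>} (\<lambda>t. g (c + tent s t)) = integral {fall s \<beta>..fall s \<alpha>} (\<lambda>t. h (- t))"
    by (intro Henstock_Kurzweil_Integration.integral_cong)
      (simp add: tent_on_fall[OF s] h_def diff_divide_distrib algebra_simps)
  also have "\<dots> = integral {- fall s \<alpha>..- fall s \<beta>} h"
    using Henstock_Kurzweil_Integration.integral_reflect_real[of "- fall s \<beta>" "- fall s \<alpha>" h] by simp
  also have "\<dots> = integral {(1 / (1 - s)) * (- fall s \<alpha>) + (c + 1 / (1 - s))..
      (1 / (1 - s)) * (- fall s \<beta>) + (c + 1 / (1 - s))} g / (1 / (1 - s))"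
    unfolding h_def using s assms
    by (intro integral_linear_substitution g) (auto simp: fall_def mult_left_mono)
  finally show ?thesis by (simp only: e) simp
qed

lemma integral_tent_peak:
  assumes "0 \<le> \<alpha>" "\<alpha> \<le> 1" "0 \<le> \<beta>" "\<beta> \<le> 1"
  shows "integral {rise s \<alpha>..fall s \<beta>} (\<lambda>t. g (c + tent s t))
    = s * integral {c + \<alpha>..c + 1} g + (1 - s) * integral {c + \<beta>..c + 1} g"
proof -
  define G where "G = (\<lambda>t. g (c + tent s t))"
  have "continuous_on UNIV G" unfolding G_def
    by (intro continuous_on_compose2[OF g] continuous_intros continuous_on_tent) auto
  then have int: "G integrable_on {rise s \<alpha>..fall s \<beta>}"
    by (auto intro: integrable_continuous_interval continuous_on_subset)
  have "s * \<alpha> \<le> s" "(1 - s) * \<beta> \<le> 1 - s" using s assms by (auto intro: mult_left_le)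
  then have le: "rise s \<alpha> \<le> rise s 1" "rise s 1 \<le> fall s \<beta>" by (simp_all add: rise_def fall_def)
  have "integral {rise s \<alpha>..fall s \<beta>} G
      = integral {rise s \<alpha>..rise s 1} G + integral {fall s 1..fall s \<beta>} G"
    using Henstock_Kurzweil_Integration.integral_combine[OF le int] by (simp add: rise_def fall_def)
  then show ?thesis
    using integral_tent_rise[of \<alpha> 1 c] integral_tent_fall[of \<beta> 1 c] assms by (simp add: G_def)
qed

end

context three_branch_hamiltonian
begin

lemma integral_branch1: "1/3 \<le> a \<Longrightarrow> integral {a..b} branch1 = integral {a..b} \<psi>1"
  by (rule Henstock_Kurzweil_Integration.integral_cong) (simp add: branch1_eq)

lemma integral_branch3: "0 \<le> a \<Longrightarrow> b \<le> 1/2 \<Longrightarrow> integral {a..b} branch3 = integral {a..b} \<psi>3"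
  by (rule Henstock_Kurzweil_Integration.integral_cong) (simp add: branch3_eq)

lemma mixint_eq: "mixint F \<theta>1 \<theta>2 s = s * integral {1/3..1/2} branch1 + (1 - s) * integral {1/3..1/2} branch3"
proof -
  have "mixint F \<theta>1 \<theta>2 s = integral {1/3..1/2} (\<lambda>y. s * branch1 y + (1 - s) * branch3 y)"
    unfolding mixint_def by (rule Henstock_Kurzweil_Integration.integral_cong) (simp add: branch1_eq branch3_eq)
  also have "\<dots> = s * integral {1/3..1/2} branch1 + (1 - s) * integral {1/3..1/2} branch3"
    by (subst Henstock_Kurzweil_Integration.integral_add)
      (auto intro!: integrable_continuous_interval continuous_intros
        continuous_on_subset[OF continuous_branch1] continuous_on_subset[OF continuous_branch3])
  finally show ?thesis .
qed

section \<open>Explicit solutions\<close>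

text \<open>Names ending in \<open>a\<close>, \<open>b\<close>, \<open>c\<close>, \<open>d\<close> refer to the four slope ranges (a)--(d) of the
  proposition.\<close>

subsection \<open>\<open>\<lambda> \<ge> 1/3\<close>: a single branch\<close>

definition slope_d :: "real \<Rightarrow> real" where
  "slope_d lam = integral {lam..1 + lam} \<psi>1"

lemma solvable_d:
  assumes s: "0 < s" "s < 1" and lam: "1/3 \<le> lam"
  shows "cell_problem_solvable F s (slope_d lam) lam"
proof -
  have "cell_problem_solvable F s (piece_integrals 0 [] (tent_slopes s lam [branch1])) lam"
  proof (rule cell_problem_solvable_tent_slopes[OF s])
    show "admissible_tent_kink F s lam [] [branch1] t" if "0 < t" "t < 1" for t
      using lam tent_nonneg[OF s, of t] that
      by (auto intro: admissible_kink_smooth simp: F_branch1 admissible_tent_kink_def)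
    show "admissible_kink F (([branch1] ! piece_left [] 1) lam) (([branch1] ! piece [] 0) lam) lam"
      using lam by (auto intro: admissible_kink_smooth simp: F_branch1)
  qed (auto simp: continuous_branch1)
  moreover have "piece_integrals 0 [] (tent_slopes s lam [branch1]) = slope_d lam"
  proof -
    have "integral {0..1} (\<lambda>t. branch1 (lam + tent s t)) = integral {lam..lam + 1} branch1"
      using integral_tent_peak[OF s continuous_branch1, of 0 0 lam] by (simp add: algebra_simps)
    then show ?thesis using integral_branch1[OF lam, of "1 + lam"]
      by (simp add: slope_d_def tent_slopes_def add.commute)
  qed
  ultimately show ?thesis by simp
qed

subsection \<open>\<open>0 \<le> \<lambda> \<le> 1/3\<close>: one excursion to the upper branch\<close>

definition slope_b :: "real \<Rightarrow> real \<Rightarrow> real" where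
  "slope_b s lam = integral {lam..1/3} \<psi>3 + integral {1/2..1 + lam} \<psi>1 + mixint F \<theta>1 \<theta>2 s"

lemma breakpoints_b:
  assumes s: "0 < s" "s < 1" and lam: "0 \<le> lam" "lam \<le> 1/3"
  shows "0 \<le> rise s (1/3 - lam)" "rise s (1/3 - lam) < s" "s \<le> fall s (1/2 - lam)"
    "fall s (1/2 - lam) < 1" "fall s (1/2 - lam) \<le> fall s (1/3 - lam)"
proof -
  have "0 \<le> s * (1/3 - lam)" "s * (1/3 - lam) < s" "(1 - s) * (1/2 - lam) \<le> 1 - s"
    "0 < (1 - s) * (1/2 - lam)" "(1 - s) * (1/3 - lam) \<le> (1 - s) * (1/2 - lam)"
    using s lam by (auto intro: mult_left_le mult_left_mono)
  then show "0 \<le> rise s (1/3 - lam)" "rise s (1/3 - lam) < s" "s \<le> fall s (1/2 - lam)"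
    "fall s (1/2 - lam) < 1" "fall s (1/2 - lam) \<le> fall s (1/3 - lam)"
    unfolding rise_def fall_def by linarith+
qed

lemma tent_kinks_b:
  assumes s: "0 < s" "s < 1" and lam: "0 \<le> lam" "lam \<le> 1/3" and t: "0 < t" "t < 1"
  shows "admissible_tent_kink F s lam [rise s (1/3 - lam), fall s (1/2 - lam)] [branch3, branch1, branch3] t"
    (is "admissible_tent_kink F s lam [?a, ?b] _ t")
proof -
  note ab = breakpoints_b[OF s lam]
  have v: "0 \<le> lam + tent s t" using tent_nonneg[OF s, of t] t lam by simp
  consider "t < ?a" | "t = ?a" | "?a < t" "t < ?b" | "t = ?b" | "?b < t" using ab by linarith
  then show ?thesis
  proof cases
    case 1
    then have "lam + tent s t \<le> 1/2" using tent_ge_iff[OF s, of "1/3 - lam" t] by simp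
    then show ?thesis using 1 ab v by (auto intro: admissible_kink_smooth simp: F_branch3 admissible_tent_kink_def)
  next
    case 2
    then show ?thesis using ab kink_3_1 tent_rise[OF s, of "1/3 - lam"] lam by (simp add: admissible_tent_kink_def)
  next
    case 3
    then have "1/3 \<le> lam + tent s t" using tent_ge_iff[OF s, of "1/3 - lam" t] ab by simp
    then show ?thesis using 3 by (auto intro: admissible_kink_smooth simp: F_branch1 admissible_tent_kink_def)
  next
    case 4
    then show ?thesis using ab kink_1_3 tent_fall[OF s, of "1/2 - lam"] lam by (simp add: admissible_tent_kink_def)
  next
    case 5
    then have "lam + tent s t \<le> 1/2" using tent_le_iff[OF s, of t "1/2 - lam"] by simp
    then show ?thesis using 5 ab v by (auto intro: admissible_kink_smooth simp: F_branch3 admissible_tent_kink_def)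
  qed
qed

lemma solvable_b:
  assumes s: "0 < s" "s < 1" and lam: "0 \<le> lam" "lam \<le> 1/3"
  shows "cell_problem_solvable F s (piece_integrals 0 [rise s (1/3 - lam), fall s (1/2 - lam)]
    (tent_slopes s lam [branch3, branch1, branch3])) lam"
    (is "cell_problem_solvable F s (piece_integrals 0 [?a, ?b] _) lam")
proof (rule cell_problem_solvable_tent_slopes[OF s _ _ _ _ tent_kinks_b[OF s lam]])
  note ab = breakpoints_b[OF s lam]
  show "sorted [?a, ?b]" "set [?a, ?b] \<subseteq> {0..1}" using ab by auto
  show "admissible_kink F (([branch3, branch1, branch3] ! piece_left [?a, ?b] 1) lam)
      (([branch3, branch1, branch3] ! piece [?a, ?b] 0) lam) lam"
  proof (cases "lam = 1/3")
    case True
    then show ?thesis using kink_3_1 ab unfolding True by (simp add: rise_def)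
  next
    case False
    then have "0 < ?a" using s lam by (simp add: rise_def)
    then show ?thesis using ab lam by (auto intro: admissible_kink_smooth simp: F_branch3)
  qed
qed (auto simp: continuous_branch1 continuous_branch3)

lemma piece_integrals_b:
  assumes s: "0 < s" "s < 1" and lam: "0 \<le> lam" "lam \<le> 1/3"
  shows "piece_integrals 0 [rise s (1/3 - lam), fall s (1/2 - lam)] (tent_slopes s lam [branch3, branch1, branch3])
    = slope_b s lam"
proof -
  note rise = integral_tent_rise[OF s] and fall = integral_tent_fall[OF s] and peak = integral_tent_peak[OF s]
  have "integral {0..rise s (1/3 - lam)} (\<lambda>t. branch3 (lam + tent s t)) = s * integral {lam..1/3} branch3"
    using rise[OF continuous_branch3, of 0 "1/3 - lam" lam] lam by simp
  moreover have "integral {rise s (1/3 - lam)..fall s (1/2 - lam)} (\<lambda>t. branch1 (lam + tent s t))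
      = s * integral {1/3..lam + 1} branch1 + (1 - s) * integral {1/2..lam + 1} branch1"
    using peak[OF continuous_branch1, of "1/3 - lam" "1/2 - lam" lam] lam by simp
  moreover have "integral {fall s (1/2 - lam)..1} (\<lambda>t. branch3 (lam + tent s t))
      = (1 - s) * integral {lam..1/2} branch3"
    using fall[OF continuous_branch3, of 0 "1/2 - lam" lam] lam by simp
  moreover have "integral {1/3..lam + 1} branch1 = integral {1/3..1/2} branch1 + integral {1/2..lam + 1} branch1"
    using lam by (intro integral_split_continuous continuous_branch1) auto
  moreover have "integral {lam..1/2} branch3 = integral {lam..1/3} branch3 + integral {1/3..1/2} branch3"
    using lam by (intro integral_split_continuous continuous_branch3) auto
  moreover have "slope_b s lam = integral {lam..1/3} branch3 + integral {1/2..lam + 1} branch1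
      + s * integral {1/3..1/2} branch1 + (1 - s) * integral {1/3..1/2} branch3"
    using integral_branch1[of "1/2" "1 + lam"] integral_branch3[of lam "1/3"] lam
    by (simp add: slope_b_def mixint_eq add.commute)
  ultimately show ?thesis by (simp add: tent_slopes_def algebra_simps)
qed

subsection \<open>\<open>\<lambda> = 1/3\<close>: a family of solutions with a jump to the middle branch\<close>

definition "branches_c = [branch1, branch3, branch2]"

definition "slope_c1 s Y = piece_integrals 0 [fall s (1/6), Y] (tent_slopes s (1/3) branches_c)"
definition "slope_c2 s Y = piece_integrals 0 [Y, Y] (tent_slopes s (1/3) branches_c)"

lemma continuous_branches_c: "b \<in> set branches_c \<Longrightarrow> continuous_on UNIV b"
  by (auto simp: branches_c_def continuous_branch1 continuous_branch2 continuous_branch3)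

lemma fall_sixth: "0 < s \<Longrightarrow> s < 1 \<Longrightarrow> s < fall s (1/6) \<and> fall s (1/6) < 1"
  by (auto simp: fall_def field_simps)

lemma tent_kinks_c1:
  assumes s: "0 < s" "s < 1" and Y: "fall s (1/6) \<le> Y" "Y \<le> 1" and t: "0 < t" "t < 1"
  shows "admissible_tent_kink F s (1/3) [fall s (1/6), Y] branches_c t"
    (is "admissible_tent_kink F s (1/3) [?m, Y] _ t")
proof -
  have v: "0 \<le> tent s t" using tent_nonneg[OF s, of t] t by simp
  consider "t < ?m" | "t = ?m" | "?m < t" "t < Y" | "?m < Y" "t = Y" | "Y < t" using Y by linarith
  then show ?thesis
  proof cases
    case 1
    then show ?thesis using Y v by (auto intro: admissible_kink_smooth simp: F_branch1 branches_c_def admissible_tent_kink_def)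
  next
    case 2
    then show ?thesis using Y kink_1_3 by (auto simp: branches_c_def tent_fall[OF s] branch_values admissible_tent_kink_def)
  next
    case 3
    then have "tent s t \<le> 1/6" using tent_le_iff[OF s, of t "1/6"] by simp
    then show ?thesis using 3 v by (auto intro: admissible_kink_smooth simp: F_branch3 branches_c_def admissible_tent_kink_def)
  next
    case 4
    then have "tent s t \<le> 1/6" using tent_le_iff[OF s, of t "1/6"] by simp
    then show ?thesis using 4 v kink_3_2[of "1/3 + tent s t"] by (auto simp: branches_c_def admissible_tent_kink_def)
  next
    case 5
    then have "tent s t \<le> 1/6" using tent_le_iff[OF s, of t "1/6"] Y by simp
    then show ?thesis using 5 Y v by (auto intro: admissible_kink_smooth simp: F_branch2 branches_c_def admissible_tent_kink_def)
  qed
qed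

lemma tent_kinks_c2:
  assumes s: "0 < s" "s < 1" and Y: "fall s (1/6) \<le> Y" "Y \<le> 1" and t: "0 < t" "t < 1"
  shows "admissible_tent_kink F s (1/3) [Y, Y] branches_c t"
proof -
  have v: "0 \<le> tent s t" using tent_nonneg[OF s, of t] t by simp
  consider "t < Y" | "t = Y" | "Y < t" by linarith
  then show ?thesis
  proof cases
    case 1
    then show ?thesis using v by (auto intro: admissible_kink_smooth simp: F_branch1 branches_c_def admissible_tent_kink_def)
  next
    case 2
    then have "tent s t \<le> 1/6" using tent_le_iff[OF s, of t "1/6"] Y by simp
    then show ?thesis using 2 v kink_1_2[of "1/3 + tent s t"] by (auto simp: branches_c_def admissible_tent_kink_def)
  next
    case 3
    then have "tent s t \<le> 1/6" using tent_le_iff[OF s, of t "1/6"] Y by simp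
    then show ?thesis using 3 v by (auto intro: admissible_kink_smooth simp: F_branch2 branches_c_def admissible_tent_kink_def)
  qed
qed

lemma endpoint_c:
  assumes "piece_left ts 1 \<le> 2" "piece ts 0 = 0"
  shows "admissible_kink F ((branches_c ! piece_left ts 1) (1/3)) ((branches_c ! piece ts 0) (1/3)) (1/3)"
proof -
  have "admissible_kink F \<theta>1 \<theta>1 (1/3)" using vals by (intro admissible_kink_smooth) simp
  then show ?thesis using assms kink_3_1 branch_values by (auto simp: branches_c_def le_Suc_eq numeral_eq_Suc)
qed

lemma solvable_c1:
  assumes s: "0 < s" "s < 1" and Y: "fall s (1/6) \<le> Y" "Y \<le> 1"
  shows "cell_problem_solvable F s (slope_c1 s Y) (1/3)"
  unfolding slope_c1_def
  by (rule cell_problem_solvable_tent_slopes[OF s _ _ _ _ tent_kinks_c1[OF s Y] endpoint_c])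
    (use fall_sixth[OF s] s Y in \<open>auto simp: branches_c_def continuous_branches_c\<close>)

lemma solvable_c2:
  assumes s: "0 < s" "s < 1" and Y: "fall s (1/6) \<le> Y" "Y \<le> 1"
  shows "cell_problem_solvable F s (slope_c2 s Y) (1/3)"
  unfolding slope_c2_def
  by (rule cell_problem_solvable_tent_slopes[OF s _ _ _ _ tent_kinks_c2[OF s Y] endpoint_c])
    (use fall_sixth[OF s] s Y in \<open>auto simp: branches_c_def continuous_branches_c\<close>)

lemma slope_c1_at_1:
  assumes s: "0 < s" "s < 1"
  shows "slope_c1 s 1 = q_minus F \<theta>1 \<theta>2 s"
proof -
  have "integral {0..fall s (1/6)} (\<lambda>t. branch1 (1/3 + tent s t))
      = s * integral {1/3..4/3} branch1 + (1 - s) * integral {1/2..4/3} branch1"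
    using integral_tent_peak[OF s continuous_branch1, of 0 "1/6" "1/3"] by simp
  moreover have "integral {fall s (1/6)..1} (\<lambda>t. branch3 (1/3 + tent s t)) = (1 - s) * integral {1/3..1/2} branch3"
    using integral_tent_fall[OF s continuous_branch3, of 0 "1/6" "1/3"] by simp
  moreover have "integral {1/3..4/3} branch1 = integral {1/3..1/2} branch1 + integral {1/2..4/3} branch1"
    by (intro integral_split_continuous continuous_branch1) auto
  moreover have "q_minus F \<theta>1 \<theta>2 s = integral {1/2..4/3} branch1
      + s * integral {1/3..1/2} branch1 + (1 - s) * integral {1/3..1/2} branch3"
    using integral_branch1[of "1/2" "4/3"] by (simp add: q_minus_def mixint_eq)
  ultimately show ?thesis using fall_sixth[OF s]
    by (simp add: slope_c1_def tent_slopes_def branches_c_def algebra_simps)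
qed

lemma slope_c2_at_1:
  assumes s: "0 < s" "s < 1"
  shows "slope_c2 s 1 = q_plus F \<theta>1"
proof -
  have "integral {0..1} (\<lambda>t. branch1 (1/3 + tent s t)) = integral {1/3..4/3} branch1"
    using integral_tent_peak[OF s continuous_branch1, of 0 0 "1/3"] by (simp add: algebra_simps)
  then show ?thesis using integral_branch1[of "1/3" "4/3"]
    by (simp add: slope_c2_def q_plus_def tent_slopes_def branches_c_def)
qed

lemma continuous_on_slopes_c:
  assumes s: "0 < s" "s < 1"
  shows "continuous_on {fall s (1/6)..1} (slope_c1 s)" "continuous_on {fall s (1/6)..1} (slope_c2 s)"
proof -
  have m: "0 \<le> fall s (1/6)" "fall s (1/6) \<le> 1" using fall_sixth[OF s] s by simp_all
  define H where "H = tent_slopes s (1/3) branches_c"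
  have H: "continuous_on {0..1} (H i)" if "i \<le> 2" for i
    unfolding H_def by (rule continuous_on_tent_slopes[OF continuous_branches_c]) (use that in \<open>auto simp: branches_c_def\<close>)
  have "continuous_on {fall s (1/6)..1} (\<lambda>Y. piece_integrals 0 (map (\<lambda>k. k Y) [\<lambda>_. fall s (1/6), \<lambda>Y. Y]) H)"
    "continuous_on {fall s (1/6)..1} (\<lambda>Y. piece_integrals 0 (map (\<lambda>k. k Y) [\<lambda>Y. Y, \<lambda>Y. Y]) H)"
    by (rule continuous_on_piece_integrals; use m H in \<open>auto intro: continuous_intros\<close>)+
  then show "continuous_on {fall s (1/6)..1} (slope_c1 s)" "continuous_on {fall s (1/6)..1} (slope_c2 s)"
    by (simp_all add: slope_c1_def slope_c2_def H_def)
qed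

lemma solvable_c:
  assumes s: "0 < s" "s < 1" and p: "q_minus F \<theta>1 \<theta>2 s \<le> p" "p \<le> q_plus F \<theta>1"
  shows "cell_problem_solvable F s p (1/3)"
proof -
  define m where "m = fall s (1/6)"
  have "m \<le> 1" using fall_sixth[OF s] by (simp add: m_def)
  then have seg: "closed_segment m 1 = {m..1}" "closed_segment 1 m = {m..1}"
    by (simp_all add: closed_segment_eq_real_ivl)
  have cont: "continuous_on (closed_segment 1 m) (slope_c1 s)" "continuous_on (closed_segment m 1) (slope_c2 s)"
    using continuous_on_slopes_c[OF s] unfolding seg by (simp_all add: m_def)
  have "p \<in> closed_segment (slope_c1 s 1) (slope_c2 s 1)"
    using p slope_c1_at_1[OF s] slope_c2_at_1[OF s] by (simp add: closed_segment_eq_real_ivl)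
  moreover have "slope_c1 s m = slope_c2 s m" by (simp add: slope_c1_def slope_c2_def m_def)
  ultimately consider "p \<in> closed_segment (slope_c1 s 1) (slope_c1 s m)" | "p \<in> closed_segment (slope_c2 s m) (slope_c2 s 1)"
    using closed_segment_real_split[of p "slope_c1 s 1" "slope_c2 s 1" "slope_c1 s m"] by auto
  then show ?thesis
  proof cases
    case 1
    then obtain Y where "m \<le> Y" "Y \<le> 1" "slope_c1 s Y = p" using IVT_closed_segment[OF cont(1)] seg by auto
    then show ?thesis using solvable_c1[OF s, of Y] by (simp add: m_def)
  next
    case 2
    then obtain Y where "m \<le> Y" "Y \<le> 1" "slope_c2 s Y = p" using IVT_closed_segment[OF cont(2)] seg by auto
    then show ?thesis using solvable_c2[OF s, of Y] by (simp add: m_def)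
  qed
qed

subsection \<open>\<open>\<lambda> = 0\<close>: families of solutions crossing to the negative branches\<close>

definition "branches_a = [branch3, branch1, branch3, \<lambda>v. - branch2 v, \<lambda>v. - branch1 v, \<lambda>v. - branch3 v]"

lemma continuous_branches_a: "b \<in> set branches_a \<Longrightarrow> continuous_on UNIV b"
  by (auto simp: branches_a_def continuous_branch1 continuous_branch2 continuous_branch3 intro: continuous_intros)

definition "slope_a1 s X = piece_integrals 0 [rise s (1/3), fall s (1/2), X, X, X] (tent_slopes s 0 branches_a)"
definition "slope_a2 s Y =
  piece_integrals 0 [rise s (1/3), fall s (1/2), fall s (1/2), Y, Y] (tent_slopes s 0 branches_a)"
definition "slope_a3 s Z =
  piece_integrals 0 [rise s (1/3), fall s (1/2), fall s (1/2), Z, fall s (1/3)] (tent_slopes s 0 branches_a)"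
definition "slope_a4 s Q = piece_integrals 0 [rise s (1/3), Q, Q, Q, fall s (1/3)] (tent_slopes s 0 branches_a)"

lemma regime_a_breakpoints:
  assumes "0 < s" "s < 1"
  shows "0 < rise s (1/3)" "rise s (1/3) < rise s (1/2)" "rise s (1/2) < s" "s < fall s (1/2)"
    "fall s (1/2) < fall s (1/3)" "fall s (1/3) < 1"
  using assms unfolding rise_def fall_def by (simp_all add: field_simps)

lemma kink_a_low:
  assumes s: "0 < s" "s < 1" and t: "0 < t" "t < fall s (1/2)" and rest: "\<And>a. a \<in> set rest \<Longrightarrow> t < a"
  shows "admissible_tent_kink F s 0 (rise s (1/3) # rest) branches_a t"
proof -
  have "piece rest t = 0" "piece_left rest t = 0" using rest by (auto intro: piece_eq_0 piece_left_eq_0 less_imp_le)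
  have "0 \<le> tent s t" using tent_nonneg[OF s, of t] t regime_a_breakpoints[OF s] by simp
  consider "t < rise s (1/3)" | "t = rise s (1/3)" | "rise s (1/3) < t" by linarith
  then show ?thesis
  proof cases
    case 1
    then have "tent s t \<le> 1/2" using tent_ge_iff[OF s, of "1/3" t] by simp
    then show ?thesis using 1 \<open>0 \<le> tent s t\<close> \<open>piece rest t = 0\<close> \<open>piece_left rest t = 0\<close>
      by (auto intro: admissible_kink_smooth simp: F_branch3 branches_a_def admissible_tent_kink_def)
  next
    case 2
    then show ?thesis using kink_3_1 \<open>piece rest t = 0\<close> \<open>piece_left rest t = 0\<close>
      by (simp add: branches_a_def admissible_tent_kink_def tent_rise[OF s])
  next
    case 3
    then have "1/3 \<le> tent s t" using tent_ge_iff[OF s, of "1/3" t] t regime_a_breakpoints[OF s] by simp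
    then show ?thesis using 3 \<open>piece rest t = 0\<close> \<open>piece_left rest t = 0\<close>
      by (auto intro: admissible_kink_smooth simp: F_branch1 branches_a_def admissible_tent_kink_def)
  qed
qed

lemma endpoint_a:
  assumes "piece_left ts 1 \<in> {2, 5}" "piece ts 0 = 0"
  shows "admissible_kink F ((branches_a ! piece_left ts 1) 0) ((branches_a ! piece ts 0) 0) 0"
  using assms branch_values vals by (auto intro: admissible_kink_smooth simp: branches_a_def)

lemma tent_kinks_a1:
  assumes s: "0 < s" "s < 1" and X: "fall s (1/2) \<le> X" "X \<le> 1" and t: "0 < t" "t < 1"
  shows "admissible_tent_kink F s 0 [rise s (1/3), fall s (1/2), X, X, X] branches_a t"
    (is "admissible_tent_kink F s 0 [?r, ?f, X, X, X] _ t")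
proof -
  note pts = regime_a_breakpoints[OF s]
  have v: "0 \<le> tent s t" using tent_nonneg[OF s, of t] t by simp
  consider "t < ?f" | "t = ?f" | "?f < t" "t < X" | "?f < X" "t = X" | "X < t" using X by linarith
  then show ?thesis
  proof cases
    case 1
    then show ?thesis using X t by (intro kink_a_low[OF s]) auto
  next
    case 2
    then show ?thesis using X pts kink_1_3 kink_1_n3
      by (cases "X = ?f") (auto simp: branches_a_def admissible_tent_kink_def tent_fall[OF s])
  next
    case 3
    then have "tent s t \<le> 1/2" using tent_le_iff[OF s, of t "1/2"] by simp
    then show ?thesis using 3 pts v
      by (auto intro: admissible_kink_smooth simp: F_branch3 branches_a_def admissible_tent_kink_def)
  next
    case 4
    then have "tent s t \<le> 1/2" using tent_le_iff[OF s, of t "1/2"] by simp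
    then show ?thesis using 4 pts v kink_3_n3[of "tent s t"] by (auto simp: branches_a_def admissible_tent_kink_def)
  next
    case 5
    then have "tent s t \<le> 1/2" using tent_le_iff[OF s, of t "1/2"] X by simp
    then show ?thesis using 5 X pts v
      by (auto intro: admissible_kink_smooth simp: F_branch3 branches_a_def admissible_tent_kink_def)
  qed
qed

lemma solvable_a1:
  assumes s: "0 < s" "s < 1" and X: "fall s (1/2) \<le> X" "X \<le> 1"
  shows "cell_problem_solvable F s (slope_a1 s X) 0"
  unfolding slope_a1_def
  by (rule cell_problem_solvable_tent_slopes[OF s _ _ _ _ tent_kinks_a1[OF s X] endpoint_a])
    (use regime_a_breakpoints[OF s] X in \<open>auto simp: branches_a_def continuous_branches_a numeral_eq_Suc\<close>)

lemma tent_kinks_a2: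
  assumes s: "0 < s" "s < 1" and Y: "fall s (1/2) \<le> Y" "Y \<le> fall s (1/3)" and t: "0 < t" "t < 1"
  shows "admissible_tent_kink F s 0 [rise s (1/3), fall s (1/2), fall s (1/2), Y, Y] branches_a t"
    (is "admissible_tent_kink F s 0 [?r, ?f, ?f, Y, Y] _ t")
proof -
  note pts = regime_a_breakpoints[OF s]
  have v: "0 \<le> tent s t" using tent_nonneg[OF s, of t] t by simp
  consider "t < ?f" | "t = ?f" | "?f < t" "t < Y" | "?f < Y" "t = Y" | "Y < t" using Y by linarith
  then show ?thesis
  proof cases
    case 1
    then show ?thesis using Y t by (intro kink_a_low[OF s]) auto
  next
    case 2
    then show ?thesis using Y pts kink_1_n2 kink_1_n3
      by (cases "Y = ?f") (auto simp: branches_a_def admissible_tent_kink_def tent_fall[OF s])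
  next
    case 3
    then have "1/3 \<le> tent s t" "tent s t \<le> 1/2"
      using tent_le_iff[OF s, of t "1/2"] tent_ge_iff[OF s, of "1/3" t] Y pts by auto
    then show ?thesis using 3 pts
      by (auto intro: admissible_kink_smooth simp: F_branch2 branches_a_def admissible_tent_kink_def)
  next
    case 4
    then have "1/3 \<le> tent s t" "tent s t \<le> 1/2"
      using tent_le_iff[OF s, of t "1/2"] tent_ge_iff[OF s, of "1/3" t] Y pts by auto
    then show ?thesis using 4 pts kink_n2_n3[of "tent s t"] by (auto simp: branches_a_def admissible_tent_kink_def)
  next
    case 5
    then have "tent s t \<le> 1/2" using tent_le_iff[OF s, of t "1/2"] Y by simp
    then show ?thesis using 5 Y pts v
      by (auto intro: admissible_kink_smooth simp: F_branch3 branches_a_def admissible_tent_kink_def)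
  qed
qed

lemma solvable_a2:
  assumes s: "0 < s" "s < 1" and Y: "fall s (1/2) \<le> Y" "Y \<le> fall s (1/3)"
  shows "cell_problem_solvable F s (slope_a2 s Y) 0"
  unfolding slope_a2_def
  by (rule cell_problem_solvable_tent_slopes[OF s _ _ _ _ tent_kinks_a2[OF s Y] endpoint_a])
    (use regime_a_breakpoints[OF s] Y in \<open>auto simp: branches_a_def continuous_branches_a numeral_eq_Suc\<close>)

lemma tent_kinks_a3:
  assumes s: "0 < s" "s < 1" and Z: "fall s (1/2) \<le> Z" "Z \<le> fall s (1/3)" and t: "0 < t" "t < 1"
  shows "admissible_tent_kink F s 0 [rise s (1/3), fall s (1/2), fall s (1/2), Z, fall s (1/3)] branches_a t"
    (is "admissible_tent_kink F s 0 [?r, ?f, ?f, Z, ?g] _ t")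
proof -
  note pts = regime_a_breakpoints[OF s]
  have v: "0 \<le> tent s t" using tent_nonneg[OF s, of t] t by simp
  consider "t < ?f" | "t = ?f" | "?f < t" "t < Z" | "?f < Z" "t = Z" | "Z < t" "t < ?g" | "Z < ?g" "t = ?g"
    | "?g < t" using Z by linarith
  then show ?thesis
  proof cases
    case 1
    then show ?thesis using Z t pts by (intro kink_a_low[OF s]) auto
  next
    case 2
    then show ?thesis using Z pts kink_1_n2 kink_1_n1[of "1/2"]
      by (cases "Z = ?f") (auto simp: branches_a_def admissible_tent_kink_def tent_fall[OF s])
  next
    case 3
    then have "1/3 \<le> tent s t" "tent s t \<le> 1/2"
      using tent_le_iff[OF s, of t "1/2"] tent_ge_iff[OF s, of "1/3" t] Z pts by auto
    then show ?thesis using 3 Z pts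
      by (auto intro: admissible_kink_smooth simp: F_branch2 branches_a_def admissible_tent_kink_def)
  next
    case 4
    then have "1/3 \<le> tent s t" "tent s t \<le> 1/2"
      using tent_le_iff[OF s, of t "1/2"] tent_ge_iff[OF s, of "1/3" t] Z pts by auto
    then show ?thesis using 4 Z pts kink_n2_n1[of "tent s t"] kink_n2_n3[of "tent s t"]
      by (cases "Z = ?g") (auto simp: branches_a_def admissible_tent_kink_def)
  next
    case 5
    then have "1/3 \<le> tent s t" using tent_ge_iff[OF s, of "1/3" t] Z pts by auto
    then show ?thesis using 5 Z pts
      by (auto intro: admissible_kink_smooth simp: F_branch1 branches_a_def admissible_tent_kink_def)
  next
    case 6
    then show ?thesis using pts Z kink_n1_n3 by (auto simp: branches_a_def admissible_tent_kink_def tent_fall[OF s])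
  next
    case 7
    then have "tent s t \<le> 1/3" using tent_le_iff[OF s, of t "1/3"] by simp
    then show ?thesis using 7 Z pts v
      by (auto intro: admissible_kink_smooth simp: F_branch3 branches_a_def admissible_tent_kink_def)
  qed
qed

lemma solvable_a3:
  assumes s: "0 < s" "s < 1" and Z: "fall s (1/2) \<le> Z" "Z \<le> fall s (1/3)"
  shows "cell_problem_solvable F s (slope_a3 s Z) 0"
  unfolding slope_a3_def
  by (rule cell_problem_solvable_tent_slopes[OF s _ _ _ _ tent_kinks_a3[OF s Z] endpoint_a])
    (use regime_a_breakpoints[OF s] Z in \<open>auto simp: branches_a_def continuous_branches_a numeral_eq_Suc\<close>)

lemma tent_kinks_a4:
  assumes s: "0 < s" "s < 1" and Q: "rise s (1/2) \<le> Q" "Q \<le> fall s (1/2)" and t: "0 < t" "t < 1"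
  shows "admissible_tent_kink F s 0 [rise s (1/3), Q, Q, Q, fall s (1/3)] branches_a t"
    (is "admissible_tent_kink F s 0 [?r, Q, Q, Q, ?g] _ t")
proof -
  note pts = regime_a_breakpoints[OF s]
  have v: "0 \<le> tent s t" using tent_nonneg[OF s, of t] t by simp
  consider "t < Q" | "t = Q" | "Q < t" "t < ?g" | "t = ?g" | "?g < t" using Q pts by linarith
  then show ?thesis
  proof cases
    case 1
    then show ?thesis using Q t pts by (intro kink_a_low[OF s]) auto
  next
    case 2
    then have "1/2 \<le> tent s t" using tent_ge_iff[OF s, of "1/2" t] Q by simp
    then show ?thesis using 2 pts Q kink_1_n1[of "tent s t"] by (auto simp: branches_a_def admissible_tent_kink_def)
  next
    case 3
    then have "1/3 \<le> tent s t" using tent_ge_iff[OF s, of "1/3" t] Q pts by auto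
    then show ?thesis using 3 pts Q
      by (auto intro: admissible_kink_smooth simp: F_branch1 branches_a_def admissible_tent_kink_def)
  next
    case 4
    then show ?thesis using pts Q kink_n1_n3 by (auto simp: branches_a_def admissible_tent_kink_def tent_fall[OF s])
  next
    case 5
    then have "tent s t \<le> 1/3" using tent_le_iff[OF s, of t "1/3"] by simp
    then show ?thesis using 5 Q pts v
      by (auto intro: admissible_kink_smooth simp: F_branch3 branches_a_def admissible_tent_kink_def)
  qed
qed

lemma solvable_a4:
  assumes s: "0 < s" "s < 1" and Q: "rise s (1/2) \<le> Q" "Q \<le> fall s (1/2)"
  shows "cell_problem_solvable F s (slope_a4 s Q) 0"
  unfolding slope_a4_def
  by (rule cell_problem_solvable_tent_slopes[OF s _ _ _ _ tent_kinks_a4[OF s Q] endpoint_a])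
    (use regime_a_breakpoints[OF s] Q in \<open>auto simp: branches_a_def continuous_branches_a numeral_eq_Suc\<close>)

lemma continuous_on_psi1_upto: "1/3 \<le> c \<Longrightarrow> continuous_on {1/3..c} \<psi>1"
  using continuous_on_psi1[of "\<psi>1 c"] psi1[of c] by simp

lemma integral_branch_bounds:
  assumes "a \<le> b"
  shows "\<theta>1 * (b - a) \<le> integral {a..b} branch1" "integral {a..b} branch3 \<le> \<theta>2 * (b - a)"
    "0 \<le> integral {a..b} branch3"
  using assms branch_bounds
    integral_ge_const[of a b branch1 \<theta>1] integral_le_const[of a b branch3 \<theta>2] integral_ge_const[of a b branch3 0]
  by (auto intro: continuous_on_subset[OF continuous_branch1] continuous_on_subset[OF continuous_branch3])

lemma slope_thresholds:
  assumes s: "0 < s" "s < 1"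
  shows "0 < p_plus F \<theta>1 \<theta>2 s" "p_plus F \<theta>1 \<theta>2 s < q_minus F \<theta>1 \<theta>2 s" "q_minus F \<theta>1 \<theta>2 s < q_plus F \<theta>1"
proof -
  have p: "p_plus F \<theta>1 \<theta>2 s = integral {0..1/3} branch3 + integral {1/2..1} branch1
      + s * integral {1/3..1/2} branch1 + (1 - s) * integral {1/3..1/2} branch3"
    using integral_branch1[of "1/2" 1] integral_branch3[of 0 "1/3"] by (simp add: p_plus_def mixint_eq)
  have q: "q_minus F \<theta>1 \<theta>2 s = integral {1/2..1} branch1 + integral {1..4/3} branch1
      + s * integral {1/3..1/2} branch1 + (1 - s) * integral {1/3..1/2} branch3"
    using integral_branch1[of "1/2" "4/3"] integral_split_continuous[OF continuous_branch1, of "1/2" 1 "4/3"]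
    by (simp add: q_minus_def mixint_eq)
  have r: "q_plus F \<theta>1 = integral {1/3..1/2} branch1 + integral {1/2..1} branch1 + integral {1..4/3} branch1"
    using integral_branch1[of "1/3" "4/3"] integral_split_continuous[OF continuous_branch1, of "1/3" "1/2" "4/3"]
      integral_split_continuous[OF continuous_branch1, of "1/2" 1 "4/3"]
    by (simp add: q_plus_def)
  have b: "\<theta>1 / 2 \<le> integral {1/2..1} branch1" "\<theta>1 / 3 \<le> integral {1..4/3} branch1"
    "\<theta>1 / 6 \<le> integral {1/3..1/2} branch1" "integral {0..1/3} branch3 \<le> \<theta>2 / 3"
    "integral {1/3..1/2} branch3 \<le> \<theta>2 / 6" "0 \<le> integral {0..1/3} branch3" "0 \<le> integral {1/3..1/2} branch3"
    using integral_branch_bounds[of "1/2" 1] integral_branch_bounds[of 1 "4/3"]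
      integral_branch_bounds[of "1/3" "1/2"] integral_branch_bounds[of 0 "1/3"] by simp_all
  have "0 \<le> s * integral {1/3..1/2} branch1" "0 \<le> (1 - s) * integral {1/3..1/2} branch3"
    using s b th by simp_all
  then show "0 < p_plus F \<theta>1 \<theta>2 s" using b th by (simp add: p)
  show "p_plus F \<theta>1 \<theta>2 s < q_minus F \<theta>1 \<theta>2 s" using b th by (simp add: p q)
  have "0 < (1 - s) * (integral {1/3..1/2} branch1 - integral {1/3..1/2} branch3)"
    using s b th by (intro mult_pos_pos) auto
  then show "q_minus F \<theta>1 \<theta>2 s < q_plus F \<theta>1" by (simp add: q r algebra_simps)
qed

lemma slope_a1_at_1:
  assumes s: "0 < s" "s < 1"
  shows "slope_a1 s 1 = p_plus F \<theta>1 \<theta>2 s"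
proof -
  have "slope_a1 s 1
      = piece_integrals 0 [rise s (1/3 - 0), fall s (1/2 - 0)] (tent_slopes s 0 [branch3, branch1, branch3])"
    by (simp add: slope_a1_def branches_a_def tent_slopes_def)
  also have "\<dots> = slope_b s 0" by (rule piece_integrals_b[OF s]) simp_all
  finally show ?thesis by (simp add: slope_b_def p_plus_def)
qed

lemma slope_a4_negative:
  assumes s: "0 < s" "s < 1"
  shows "slope_a4 s (rise s (1/2)) < 0"
proof -
  note rise = integral_tent_rise[OF s] and fall = integral_tent_fall[OF s] and peak = integral_tent_peak[OF s]
  have "slope_a4 s (rise s (1/2))
    = s * integral {0..1/3} branch3 + s * integral {1/3..1/2} branch1
      - (s * integral {1/2..1} branch1 + (1 - s) * integral {1/3..1} branch1) - (1 - s) * integral {0..1/3} branch3"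
    using rise[OF continuous_branch3, of 0 "1/3" 0] rise[OF continuous_branch1, of "1/3" "1/2" 0]
      peak[OF continuous_branch1, of "1/2" "1/3" 0] fall[OF continuous_branch3, of 0 "1/3" 0]
    by (simp add: slope_a4_def branches_a_def tent_slopes_def)
  moreover have "integral {1/3..1/2} branch1 \<le> \<psi>1 (1/2) * (1/2 - 1/3)"
    by (rule integral_le_const[OF _ continuous_on_subset[OF continuous_branch1]]) (auto simp: branch1_def psi1_mono)
  then have "s * integral {1/3..1/2} branch1 \<le> s * (\<psi>1 (1/2) / 6)" using s by (simp add: mult_left_mono)
  moreover have "\<psi>1 (1/2) * (1 - 1/2) \<le> integral {1/2..1} branch1"
    by (rule integral_ge_const[OF _ continuous_on_subset[OF continuous_branch1]]) (auto simp: branch1_eq psi1_mono)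
  then have "s * (\<psi>1 (1/2) / 2) \<le> s * integral {1/2..1} branch1" using s by (simp add: mult_left_mono)
  moreover have "integral {0..1/3} branch3 \<le> \<theta>2 / 3" "0 \<le> integral {0..1/3} branch3"
    "0 \<le> integral {1/3..1} branch1"
    using integral_branch_bounds[of 0 "1/3"] integral_branch_bounds[of "1/3" 1] th by simp_all
  then have "s * integral {0..1/3} branch3 \<le> s * (\<theta>2 / 3)" "0 \<le> (1 - s) * integral {0..1/3} branch3"
    "0 \<le> (1 - s) * integral {1/3..1} branch1" using s by (simp_all add: mult_left_mono)
  moreover have "s * \<theta>2 < s * \<psi>1 (1/2)" using psi1[of "1/2"] th s by simp
  ultimately show ?thesis by (simp add: algebra_simps)
qed

lemma continuous_on_slopes_a:
  assumes s: "0 < s" "s < 1"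
  shows "continuous_on {fall s (1/2)..1} (slope_a1 s)" "continuous_on {fall s (1/2)..fall s (1/3)} (slope_a2 s)"
    "continuous_on {fall s (1/2)..fall s (1/3)} (slope_a3 s)" "continuous_on {rise s (1/2)..fall s (1/2)} (slope_a4 s)"
proof -
  note pts = regime_a_breakpoints[OF s]
  define H where "H = tent_slopes s 0 branches_a"
  have H: "continuous_on {0..1} (H i)" if "i \<le> 5" for i
    unfolding H_def by (rule continuous_on_tent_slopes[OF continuous_branches_a]) (use that in \<open>auto simp: branches_a_def\<close>)
  let ?r = "rise s (1/3)" and ?f = "fall s (1/2)" and ?g = "fall s (1/3)"
  have "continuous_on {?f..1} (\<lambda>X. piece_integrals 0 (map (\<lambda>k. k X) [\<lambda>_. ?r, \<lambda>_. ?f, \<lambda>X. X, \<lambda>X. X, \<lambda>X. X]) H)"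
    "continuous_on {?f..?g} (\<lambda>Y. piece_integrals 0 (map (\<lambda>k. k Y) [\<lambda>_. ?r, \<lambda>_. ?f, \<lambda>_. ?f, \<lambda>Y. Y, \<lambda>Y. Y]) H)"
    "continuous_on {?f..?g} (\<lambda>Z. piece_integrals 0 (map (\<lambda>k. k Z) [\<lambda>_. ?r, \<lambda>_. ?f, \<lambda>_. ?f, \<lambda>Z. Z, \<lambda>_. ?g]) H)"
    "continuous_on {rise s (1/2)..?f} (\<lambda>Q. piece_integrals 0 (map (\<lambda>k. k Q) [\<lambda>_. ?r, \<lambda>Q. Q, \<lambda>Q. Q, \<lambda>Q. Q, \<lambda>_. ?g]) H)"
    by (rule continuous_on_piece_integrals; use pts H in \<open>auto intro: continuous_intros\<close>)+
  then show "continuous_on {?f..1} (slope_a1 s)" "continuous_on {?f..?g} (slope_a2 s)"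
    "continuous_on {?f..?g} (slope_a3 s)" "continuous_on {rise s (1/2)..?f} (slope_a4 s)"
    by (simp_all add: slope_a1_def slope_a2_def slope_a3_def slope_a4_def H_def)
qed

text \<open>The four families are glued at equal breakpoint lists into one path whose slope runs
  from \<open>p\<^sub>+\<close> down to a negative value.\<close>

lemma solvable_a:
  assumes s: "0 < s" "s < 1" and p: "0 \<le> p" "p \<le> p_plus F \<theta>1 \<theta>2 s"
  shows "cell_problem_solvable F s p 0"
proof -
  define f where "f = fall s (1/2)"
  define g where "g = fall s (1/3)"
  define h where "h = rise s (1/2)"
  have "h < f" "f < g" "g < 1" using regime_a_breakpoints[OF s] by (simp_all add: f_def g_def h_def)
  then have seg: "closed_segment 1 f = {f..1}" "closed_segment f g = {f..g}" "closed_segment g f = {f..g}"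
    "closed_segment f h = {h..f}" by (simp_all add: closed_segment_eq_real_ivl)
  have cont: "continuous_on (closed_segment 1 f) (slope_a1 s)" "continuous_on (closed_segment f g) (slope_a2 s)"
    "continuous_on (closed_segment g f) (slope_a3 s)" "continuous_on (closed_segment f h) (slope_a4 s)"
    using continuous_on_slopes_a[OF s] unfolding seg by (simp_all add: f_def g_def h_def)
  have start: "p \<in> closed_segment (slope_a1 s 1) (slope_a4 s h)"
    using p slope_a1_at_1[OF s] slope_a4_negative[OF s] by (simp add: h_def closed_segment_eq_real_ivl)
  have joins: "slope_a1 s f = slope_a2 s f" "slope_a2 s g = slope_a3 s g" "slope_a3 s f = slope_a4 s f"
    by (simp_all add: slope_a1_def slope_a2_def slope_a3_def slope_a4_def f_def g_def)
  have "p \<in> closed_segment (slope_a1 s 1) (slope_a1 s f) \<or> p \<in> closed_segment (slope_a2 s f) (slope_a4 s h)"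
    using closed_segment_real_split[OF start, of "slope_a1 s f"] joins by simp
  moreover have "p \<in> closed_segment (slope_a2 s f) (slope_a2 s g) \<or> p \<in> closed_segment (slope_a3 s g) (slope_a4 s h)"
    if "p \<in> closed_segment (slope_a2 s f) (slope_a4 s h)"
    using closed_segment_real_split[OF that, of "slope_a2 s g"] joins by simp
  moreover have "p \<in> closed_segment (slope_a3 s g) (slope_a3 s f) \<or> p \<in> closed_segment (slope_a4 s f) (slope_a4 s h)"
    if "p \<in> closed_segment (slope_a3 s g) (slope_a4 s h)"
    using closed_segment_real_split[OF that, of "slope_a3 s f"] joins by simp
  ultimately consider "p \<in> closed_segment (slope_a1 s 1) (slope_a1 s f)"
    | "p \<in> closed_segment (slope_a2 s f) (slope_a2 s g)" | "p \<in> closed_segment (slope_a3 s g) (slope_a3 s f)"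
    | "p \<in> closed_segment (slope_a4 s f) (slope_a4 s h)" by blast
  then show ?thesis
  proof cases
    case 1
    then obtain X where "f \<le> X" "X \<le> 1" "slope_a1 s X = p" using IVT_closed_segment[OF cont(1)] seg by auto
    then show ?thesis using solvable_a1[OF s, of X] by (simp add: f_def)
  next
    case 2
    then obtain Y where "f \<le> Y" "Y \<le> g" "slope_a2 s Y = p" using IVT_closed_segment[OF cont(2)] seg by auto
    then show ?thesis using solvable_a2[OF s, of Y] by (simp add: f_def g_def)
  next
    case 3
    then obtain Z where "f \<le> Z" "Z \<le> g" "slope_a3 s Z = p" using IVT_closed_segment[OF cont(3)] seg by auto
    then show ?thesis using solvable_a3[OF s, of Z] by (simp add: f_def g_def)
  next
    case 4
    then obtain Q where "h \<le> Q" "Q \<le> f" "slope_a4 s Q = p" using IVT_closed_segment[OF cont(4)] seg by auto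
    then show ?thesis using solvable_a4[OF s, of Q] by (simp add: f_def h_def)
  qed
qed

lemma continuous_on_slope_b: "continuous_on {0..1/3} (slope_b s)"
  unfolding slope_b_def
  by (intro continuous_intros continuous_on_integral_between[OF continuous_on_psi3]
      continuous_on_integral_between[OF continuous_on_psi1_upto[of "4/3"]]) auto

lemma continuous_on_slope_d: "1/3 \<le> L \<Longrightarrow> continuous_on {1/3..L} slope_d"
  unfolding slope_d_def
  by (intro continuous_on_integral_between[OF continuous_on_psi1_upto[of "L + 1"]] continuous_intros) auto

lemma slope_d_unbounded: "\<exists>L\<ge>1/3. p \<le> slope_d L"
proof -
  define L where "L = F (max \<theta>1 p)"
  have L: "1/3 \<le> L" using F_le_high[of \<theta>1 "max \<theta>1 p"] vals by (simp add: L_def)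
  have "\<psi>1 L * (1 + L - L) \<le> integral {L..1 + L} \<psi>1"
    by (rule integral_ge_const[OF _ continuous_on_subset[OF continuous_on_psi1_upto[of "1 + L"]]])
      (use L in \<open>auto intro: psi1_mono\<close>)
  moreover have "\<psi>1 L = max \<theta>1 p" unfolding L_def by (rule psi1_eqI) auto
  ultimately show ?thesis using L by (intro exI[of _ L]) (auto simp: slope_d_def)
qed

lemma Hbar_regime_a:
  assumes s: "0 < s" "s < 1" and p: "0 \<le> p" "p \<le> p_plus F \<theta>1 \<theta>2 s"
  shows "Hbar F s p = 0"
  using Hbar_eqI[OF s solvable_a[OF s p]] .

lemma Hbar_regime_b:
  assumes s: "0 < s" "s < 1" and p: "p_plus F \<theta>1 \<theta>2 s \<le> p" "p \<le> q_minus F \<theta>1 \<theta>2 s"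
  shows "Hbar F s p \<in> {0..1/3} \<and> p = slope_b s (Hbar F s p)
    \<and> (\<forall>lam\<in>{0..1/3}. p = slope_b s lam \<longrightarrow> lam = Hbar F s p)"
proof -
  have Hbar: "Hbar F s (slope_b s lam) = lam" if "lam \<in> {0..1/3}" for lam
    using Hbar_eqI[OF s solvable_b[OF s]] piece_integrals_b[OF s] that by simp
  have "slope_b s 0 = p_plus F \<theta>1 \<theta>2 s" "slope_b s (1/3) = q_minus F \<theta>1 \<theta>2 s"
    by (simp_all add: slope_b_def p_plus_def q_minus_def)
  then obtain lam where "lam \<in> {0..1/3}" "slope_b s lam = p"
    using IVT'[of "slope_b s" 0 p "1/3"] continuous_on_slope_b p by auto
  then show ?thesis using Hbar by auto
qed

lemma Hbar_regime_c:
  assumes s: "0 < s" "s < 1" and p: "q_minus F \<theta>1 \<theta>2 s \<le> p" "p \<le> q_plus F \<theta>1"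
  shows "Hbar F s p = 1/3"
  using Hbar_eqI[OF s solvable_c[OF s p]] .

lemma Hbar_regime_d:
  assumes s: "0 < s" "s < 1" and p: "q_plus F \<theta>1 \<le> p"
  shows "1/3 \<le> Hbar F s p \<and> p = slope_d (Hbar F s p) \<and> (\<forall>lam\<ge>1/3. p = slope_d lam \<longrightarrow> lam = Hbar F s p)"
proof -
  have Hbar: "Hbar F s (slope_d lam) = lam" if "1/3 \<le> lam" for lam
    using Hbar_eqI[OF s solvable_d[OF s that]] .
  obtain L where L: "1/3 \<le> L" "p \<le> slope_d L" using slope_d_unbounded by blast
  moreover have "slope_d (1/3) = q_plus F \<theta>1" by (simp add: slope_d_def q_plus_def)
  ultimately obtain lam where "1/3 \<le> lam" "slope_d lam = p"
    using IVT'[of slope_d "1/3" p L] continuous_on_slope_d p by auto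
  then show ?thesis using Hbar by auto
qed

lemma solvable_nonneg_slope:
  assumes s: "0 < s" "s < 1" and p: "0 \<le> p"
  obtains lam where "cell_problem_solvable F s p lam"
proof -
  note thresholds = slope_thresholds[OF s]
  consider "p \<le> p_plus F \<theta>1 \<theta>2 s" | "p_plus F \<theta>1 \<theta>2 s \<le> p" "p \<le> q_minus F \<theta>1 \<theta>2 s"
    | "q_minus F \<theta>1 \<theta>2 s \<le> p" "p \<le> q_plus F \<theta>1" | "q_plus F \<theta>1 \<le> p" by linarith
  then show thesis
  proof cases
    case 1 then show ?thesis using solvable_a[OF s p] that by blast
  next
    case 2
    then obtain lam where "lam \<in> {0..1/3}" "p = slope_b s lam" using Hbar_regime_b[OF s] by blast
    then show ?thesis using solvable_b[OF s] piece_integrals_b[OF s] that by auto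
  next
    case 3 then show ?thesis using solvable_c[OF s] that by blast
  next
    case 4
    then obtain lam where "1/3 \<le> lam" "p = slope_d lam" using Hbar_regime_d[OF s] by blast
    then show ?thesis using solvable_d[OF s] that by auto
  qed
qed

lemma Hbar_negative_slope:
  assumes s: "0 < s" "s < 1" and p: "p < 0"
  shows "Hbar F s p = Hbar F (1 - s) (- p)"
proof -
  have s': "0 < 1 - s" "1 - s < 1" using s by auto
  have "0 \<le> - p" using p by simp
  then obtain lam where lam: "cell_problem_solvable F (1 - s) (- p) lam"
    using solvable_nonneg_slope[OF s'] by blast
  then have "cell_problem_solvable F s p lam"
    using cell_problem_solvable_reflect[OF even s' lam] by simp
  then show ?thesis using Hbar_eqI[OF s] Hbar_eqI[OF s' lam] by simp
qed

end

lemma continuous_on_smooth_fun: "smooth_fun F \<Longrightarrow> continuous_on UNIV F"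
  unfolding smooth_fun_def
  by (metis funpow_0 differentiable_imp_continuous_within continuous_at_imp_continuous_on)

theorem propositionB1:
  fixes F :: "real \<Rightarrow> real" and \<theta>1 \<theta>2 \<theta>3 s :: real
  assumes smooth: "smooth_fun F"
    and even: "\<And>x. F (- x) = F x"
    and th: "0 < \<theta>3" "\<theta>3 < \<theta>2" "\<theta>2 < \<theta>1"
    and vals: "F 0 = 0" "F \<theta>2 = 1/2" "F \<theta>1 = 1/3" "F \<theta>3 = 1/3"
    and infty: "filterlim F at_top at_top"
    and mono1: "strict_mono_on {0..\<theta>2} F"
    and mono2: "strict_mono_on {\<theta>1..} F"
    and anti: "strict_antimono_on {\<theta>2..\<theta>1} F"
    and s: "0 < s" "s < 1"
  shows "0 < p_plus F \<theta>1 \<theta>2 s \<and> p_plus F \<theta>1 \<theta>2 s < q_minus F \<theta>1 \<theta>2 s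
           \<and> q_minus F \<theta>1 \<theta>2 s < q_plus F \<theta>1
     \<and> (\<forall>p. 0 \<le> p \<and> p \<le> p_plus F \<theta>1 \<theta>2 s \<longrightarrow> Hbar F s p = 0)
     \<and> (\<forall>p. p_plus F \<theta>1 \<theta>2 s \<le> p \<and> p \<le> q_minus F \<theta>1 \<theta>2 s \<longrightarrow>
          (let eq = (\<lambda>lam. p = integral {lam..1/3} (psi3 F \<theta>2)
                             + integral {1/2..1 + lam} (psi1 F \<theta>1) + mixint F \<theta>1 \<theta>2 s)
           in Hbar F s p \<in> {0..1/3} \<and> eq (Hbar F s p)
              \<and> (\<forall>lam\<in>{0..1/3}. eq lam \<longrightarrow> lam = Hbar F s p)))
     \<and> (\<forall>p. q_minus F \<theta>1 \<theta>2 s \<le> p \<and> p \<le> q_plus F \<theta>1 \<longrightarrow> Hbar F s p = 1/3)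
     \<and> (\<forall>p. q_plus F \<theta>1 \<le> p \<longrightarrow>
          (let eq = (\<lambda>lam. p = integral {lam..1 + lam} (psi1 F \<theta>1))
           in Hbar F s p \<ge> 1/3 \<and> eq (Hbar F s p)
              \<and> (\<forall>lam. lam \<ge> 1/3 \<longrightarrow> eq lam \<longrightarrow> lam = Hbar F s p)))
     \<and> (\<forall>p. p < 0 \<longrightarrow> Hbar F s p = Hbar F (1 - s) (- p))"
proof -
  interpret three_branch_hamiltonian F \<theta>1 \<theta>2 \<theta>3
    using continuous_on_smooth_fun[OF smooth] assms by unfold_locales auto
  show ?thesis
    using slope_thresholds[OF s] Hbar_regime_a[OF s] Hbar_regime_b[OF s] Hbar_regime_c[OF s]
      Hbar_regime_d[OF s] Hbar_negative_slope[OF s]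
    unfolding Let_def slope_b_def[symmetric] slope_d_def[symmetric] by blast
qed

end
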